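(* Let $M$ be a pointed metric space such that the set $M'$ of cluster points of $M$ is infinite, and let $X$ be a non-zero Banach space. Then the norm of the bidual $(\mathcal F(M)\widehat{\otimes}_\pi X)^{**}$ is octahedral.
   Context: All Banach spaces are real. $\mathcal F(M)$ is the Lipschitz-free space over $M$ (closed linear span of evaluation functionals $\delta_p$ in the dual of the space $\mathrm{Lip}_0(M)$ of real Lipschitz functions vanishing at the base point), $\widehat{\otimes}_\pi$ is the projective tensor product. A Banach space $Z$ is octahedral if for every $x_1,\dots,x_n\in S_Z$ and $\varepsilon>0$ there is $y\in S_Z$ with $\|x_i-y\|\ge 2-\varepsilon$ for all $i$. *)

theory Defs
  imports "HOL-Analysis.Analysis"
begin

definition lip0_ball :: "'m::metric_space \<Rightarrow> ('m \<Rightarrow> real) set" where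
  "lip0_ball p0 = {f. f p0 = 0 \<and> 1-lipschitz_on UNIV f}"

text \<open>Dual norm on Lip_0(M)^* (functionals are only evaluated on Lip_0(M)).\<close>
definition lipdual_norm :: "'m::metric_space \<Rightarrow> (('m \<Rightarrow> real) \<Rightarrow> real) \<Rightarrow> real" where
  "lipdual_norm p0 mu = Sup {\<bar>mu f\<bar> | f. f \<in> lip0_ball p0}"

text \<open>Lipschitz-free space F(M): norm-closure in Lip_0(M)^* of the linear span of the
  evaluation functionals delta_p.\<close>
definition free_space :: "'m::metric_space \<Rightarrow> (('m \<Rightarrow> real) \<Rightarrow> real) set" where
  "free_space p0 = {mu. \<forall>e>0. \<exists>(n::nat) (a::nat \<Rightarrow> real) (p::nat \<Rightarrow> 'm).
      \<forall>f\<in>lip0_ball p0. \<bar>mu f - (\<Sum>i<n. a i * f (p i))\<bar> \<le> e}"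

text \<open>Dual of the projective tensor product F(M) (x)_pi X, realised (canonically, isometrically)
  as the space of bounded bilinear forms on F(M) x X with the usual norm.\<close>
definition ptensor_dual :: "'m::metric_space \<Rightarrow>
    ((('m \<Rightarrow> real) \<Rightarrow> real) \<Rightarrow> 'x::real_normed_vector \<Rightarrow> real) set" where
  "ptensor_dual p0 = {B.
      (\<forall>mu\<in>free_space p0. \<forall>x y. B mu (x + y) = B mu x + B mu y) \<and>
      (\<forall>mu\<in>free_space p0. \<forall>c x. B mu (c *\<^sub>R x) = c * B mu x) \<and>
      (\<forall>mu\<in>free_space p0. \<forall>nu\<in>free_space p0. \<forall>x.
          B (\<lambda>f. mu f + nu f) x = B mu x + B nu x) \<and>
      (\<forall>mu\<in>free_space p0. \<forall>c x. B (\<lambda>f. c * mu f) x = c * B mu x) \<and>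
      (\<exists>K. \<forall>mu\<in>free_space p0. \<forall>x. \<bar>B mu x\<bar> \<le> K * lipdual_norm p0 mu * norm x)}"

definition ptensor_dual_norm :: "'m::metric_space \<Rightarrow>
    ((('m \<Rightarrow> real) \<Rightarrow> real) \<Rightarrow> 'x::real_normed_vector \<Rightarrow> real) \<Rightarrow> real" where
  "ptensor_dual_norm p0 B = Sup {\<bar>B mu x\<bar> | mu x. mu \<in> free_space p0 \<and>
      lipdual_norm p0 mu \<le> 1 \<and> norm x \<le> 1}"

text \<open>Bidual (F(M) (x)_pi X)^{**}: bounded linear functionals on the dual, with the dual norm.\<close>
definition ptensor_bidual :: "'m::metric_space \<Rightarrow>
    (((('m \<Rightarrow> real) \<Rightarrow> real) \<Rightarrow> 'x::real_normed_vector \<Rightarrow> real) \<Rightarrow> real) set" where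
  "ptensor_bidual p0 = {Phi.
      (\<forall>B\<in>ptensor_dual p0. \<forall>C\<in>ptensor_dual p0.
          Phi (\<lambda>mu x. B mu x + C mu x) = Phi B + Phi C) \<and>
      (\<forall>B\<in>ptensor_dual p0. \<forall>c. Phi (\<lambda>mu x. c * B mu x) = c * Phi B) \<and>
      (\<exists>K. \<forall>B\<in>ptensor_dual p0. \<bar>Phi B\<bar> \<le> K * ptensor_dual_norm p0 B)}"

definition ptensor_bidual_norm :: "'m::metric_space \<Rightarrow>
    (((('m \<Rightarrow> real) \<Rightarrow> real) \<Rightarrow> 'x::real_normed_vector \<Rightarrow> real) \<Rightarrow> real) \<Rightarrow> real" where
  "ptensor_bidual_norm p0 Phi = Sup {\<bar>Phi B\<bar> | B. B \<in> ptensor_dual p0 \<and>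
      ptensor_dual_norm p0 B \<le> 1}"

text \<open>Octahedrality of a normed space whose elements are real-valued functions
  (vector operations pointwise), given by its carrier V and norm nrm.\<close>
definition octahedral_fun_space :: "('a \<Rightarrow> real) set \<Rightarrow> (('a \<Rightarrow> real) \<Rightarrow> real) \<Rightarrow> bool" where
  "octahedral_fun_space V nrm \<longleftrightarrow>
     (\<forall>(n::nat) (z::nat \<Rightarrow> 'a \<Rightarrow> real) (e::real).
        (\<forall>i<n. z i \<in> V \<and> nrm (z i) = 1) \<and> e > 0 \<longrightarrow>
        (\<exists>y\<in>V. nrm y = 1 \<and> (\<forall>i<n. nrm (\<lambda>t. z i t - y t) \<ge> 2 - e)))"

end

theory Submission
  imports Defs
begin

text \<open>
  Given z_1, ..., z_n on the unit sphere of the bidual, choose forms B_i of norm at most 1 with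
  z_i(B_i) > 1 - \<delta>; each B_i is a 1-Lipschitz map G_i : M \<rightarrow> X*. Near a cluster point c,
  replace (1 - \<delta>) G_i by its value at c plus a tent of height d(q, c) in the direction of a
  functional \<phi> norming a unit vector x0, where q \<noteq> c is very close to c; a logarithmic cutoff
  keeps the perturbed map 1-Lipschitz. On every perturbed form the elementary tensor of the
  molecule (\<delta>_c - \<delta>_q) / d(c, q) with x0 takes the value -1, whereas z_i still takes a value
  close to 1 as long as z_i barely sees the bump around c. Bumps around well separated centres
  add up to forms of norm at most 1, so among enough cluster points some centre works for all i
  at once, and the molecule tensor has distance almost 2 from every z_i.
\<close>

section \<open>Norming functionals\<close>

text \<open>Partial linear functionals dominated by the norm, represented by their graphs. A maximal one
  (Zorn's lemma) is total: this is the Hahn-Banach theorem in the form needed below.\<close>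

definition dominated_linear_graph :: "('x::real_normed_vector \<times> real) set \<Rightarrow> bool" where
  "dominated_linear_graph G \<longleftrightarrow>
     (\<forall>x a b. (x, a) \<in> G \<longrightarrow> (x, b) \<in> G \<longrightarrow> a = b) \<and>
     (\<forall>x a y b. (x, a) \<in> G \<longrightarrow> (y, b) \<in> G \<longrightarrow> (x + y, a + b) \<in> G) \<and>
     (\<forall>x a c. (x, a) \<in> G \<longrightarrow> (c *\<^sub>R x, c * a) \<in> G) \<and>
     (\<forall>x a. (x, a) \<in> G \<longrightarrow> a \<le> norm x)"

lemma dominated_linear_graphD:
  assumes "dominated_linear_graph G"
  shows dominated_linear_graph_unique: "(x, a) \<in> G \<Longrightarrow> (x, b) \<in> G \<Longrightarrow> a = b"
    and dominated_linear_graph_add: "(x, a) \<in> G \<Longrightarrow> (y, b) \<in> G \<Longrightarrow> (x + y, a + b) \<in> G"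
    and dominated_linear_graph_scale: "(x, a) \<in> G \<Longrightarrow> (c *\<^sub>R x, c * a) \<in> G"
    and dominated_linear_graph_le_norm: "(x, a) \<in> G \<Longrightarrow> a \<le> norm x"
  using assms unfolding dominated_linear_graph_def by blast+

lemma dominated_linear_graph_Union:
  assumes "subset.chain A C" and "\<And>G. G \<in> C \<Longrightarrow> dominated_linear_graph G"
  shows "dominated_linear_graph (\<Union>C)"
proof -
  have common: "\<exists>G\<in>C. p \<in> G \<and> q \<in> G" if "p \<in> \<Union>C" "q \<in> \<Union>C" for p q
    using that assms(1) unfolding subset.chain_def by blast
  show ?thesis
    using assms(2) unfolding dominated_linear_graph_def by (smt (verit) UnionE UnionI common)
qed

lemma adjoin_le_norm:
  assumes G: "dominated_linear_graph G" and "(x, a) \<in> G"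
    and r_lower: "\<And>x a. (x, a) \<in> G \<Longrightarrow> a - norm (x - z) \<le> r"
    and r_upper: "\<And>y b. (y, b) \<in> G \<Longrightarrow> r \<le> norm (y + z) - b"
  shows "a + t * r \<le> norm (x + t *\<^sub>R z)"
proof (cases t "0 :: real" rule: linorder_cases)
  case less
  have "(-t) *\<^sub>R ((1 / -t) *\<^sub>R x - z) = x + t *\<^sub>R z"
    using less by (simp add: scaleR_diff_right)
  then have norm_eq: "norm (x + t *\<^sub>R z) = -t * norm ((1 / -t) *\<^sub>R x - z)"
    using less by (metis abs_of_pos neg_0_less_iff_less norm_scaleR)
  have "(1 / -t) * a - norm ((1 / -t) *\<^sub>R x - z) \<le> r"
    using r_lower[OF dominated_linear_graph_scale[OF G \<open>(x, a) \<in> G\<close>]] .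
  then have "-t * ((1 / -t) * a - norm ((1 / -t) *\<^sub>R x - z)) \<le> -t * r"
    using less by (intro mult_left_mono) auto
  then show ?thesis using less unfolding norm_eq by (simp add: right_diff_distrib)
next
  case greater
  have "t *\<^sub>R ((1 / t) *\<^sub>R x + z) = x + t *\<^sub>R z"
    using greater by (simp add: scaleR_add_right)
  then have norm_eq: "norm (x + t *\<^sub>R z) = t * norm ((1 / t) *\<^sub>R x + z)"
    using greater by (metis abs_of_pos norm_scaleR)
  have "r \<le> norm ((1 / t) *\<^sub>R x + z) - (1 / t) * a"
    using r_upper[OF dominated_linear_graph_scale[OF G \<open>(x, a) \<in> G\<close>]] .
  then have "t * r \<le> t * (norm ((1 / t) *\<^sub>R x + z) - (1 / t) * a)"
    using greater by (intro mult_left_mono) auto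
  then show ?thesis using greater unfolding norm_eq by (simp add: right_diff_distrib)
qed (use dominated_linear_graph_le_norm[OF G \<open>(x, a) \<in> G\<close>] in simp)

lemma dominated_linear_graph_adjoin:
  assumes G: "dominated_linear_graph G" and z: "\<forall>a. (z, a) \<notin> G"
    and r_lower: "\<And>x a. (x, a) \<in> G \<Longrightarrow> a - norm (x - z) \<le> r"
    and r_upper: "\<And>y b. (y, b) \<in> G \<Longrightarrow> r \<le> norm (y + z) - b"
  shows "dominated_linear_graph {(x + t *\<^sub>R z, a + t * r) | x a t. (x, a) \<in> G}"
proof -
  note add = dominated_linear_graph_add[OF G] and scale = dominated_linear_graph_scale[OF G]
  have unique: "x = x' \<and> t = t'"
    if "(x, a) \<in> G" "(x', a') \<in> G" "x + t *\<^sub>R z = x' + t' *\<^sub>R z" for x a x' a' t t'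
  proof (cases "t = t'")
    case False
    have "x - x' = (t' - t) *\<^sub>R z" using that(3) by (simp add: algebra_simps)
    then have "(1 / (t' - t)) *\<^sub>R (x + (-1) *\<^sub>R x') = z" using False by simp
    moreover have "((1 / (t' - t)) *\<^sub>R (x + (-1) *\<^sub>R x'), (1 / (t' - t)) * (a + (-1) * a')) \<in> G"
      using scale[OF add[OF that(1) scale[OF that(2)]]] .
    ultimately show ?thesis using z by metis
  qed (use that in simp)
  show ?thesis
    unfolding dominated_linear_graph_def
  proof (intro conjI allI impI; clarify)
    fix x a t x' a' t' assume "(x, a) \<in> G" "(x', a') \<in> G" "x + t *\<^sub>R z = x' + t' *\<^sub>R z"
    then show "a + t * r = a' + t' * r" using unique dominated_linear_graph_unique[OF G] by metis
  next
    fix x a t x' a' t' assume "(x, a) \<in> G" "(x', a') \<in> G"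
    then have "(x + x', a + a') \<in> G" by (rule add)
    moreover have "x + t *\<^sub>R z + (x' + t' *\<^sub>R z) = (x + x') + (t + t') *\<^sub>R z"
      and "a + t * r + (a' + t' * r) = (a + a') + (t + t') * r" by (simp_all add: algebra_simps)
    ultimately show "\<exists>y b s. (x + t *\<^sub>R z + (x' + t' *\<^sub>R z), a + t * r + (a' + t' * r)) =
        (y + s *\<^sub>R z, b + s * r) \<and> (y, b) \<in> G" by blast
  next
    fix c x a t assume "(x, a) \<in> G"
    then have "(c *\<^sub>R x, c * a) \<in> G" by (rule scale)
    moreover have "c *\<^sub>R (x + t *\<^sub>R z) = c *\<^sub>R x + (c * t) *\<^sub>R z"
      and "c * (a + t * r) = c * a + (c * t) * r" by (simp_all add: algebra_simps)
    ultimately show "\<exists>y b s. (c *\<^sub>R (x + t *\<^sub>R z), c * (a + t * r)) =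
        (y + s *\<^sub>R z, b + s * r) \<and> (y, b) \<in> G" by blast
  qed (rule adjoin_le_norm[OF G _ r_lower r_upper])
qed

text \<open>The value r at the new direction z has to lie between the two families of bounds forced by
  domination, and any two of these bounds are compatible by the triangle inequality.\<close>

lemma dominated_linear_graph_extend:
  assumes G: "dominated_linear_graph G" and "(0, 0) \<in> G" and z: "\<forall>a. (z, a) \<notin> G"
  shows "\<exists>G'. dominated_linear_graph G' \<and> G \<subset> G'"
proof -
  have compatible: "a - norm (x - z) \<le> norm (y + z) - b" if "(x, a) \<in> G" "(y, b) \<in> G" for x a y b
    using dominated_linear_graph_le_norm[OF G dominated_linear_graph_add[OF G that]]
      norm_triangle_ineq[of "x - z" "y + z"] by simp
  define r where "r = Sup {a - norm (x - z) | x a. (x, a) \<in> G}"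
  have bdd: "bdd_above {a - norm (x - z) | x a. (x, a) \<in> G}"
    unfolding bdd_above_def using compatible[OF _ \<open>(0, 0) \<in> G\<close>] by auto
  have r_lower: "a - norm (x - z) \<le> r" if "(x, a) \<in> G" for x a
    unfolding r_def by (rule cSup_upper[OF _ bdd]) (use that in blast)
  have r_upper: "r \<le> norm (y + z) - b" if "(y, b) \<in> G" for y b
    unfolding r_def by (rule cSup_least) (use compatible that \<open>(0, 0) \<in> G\<close> in auto)
  let ?G' = "{(x + t *\<^sub>R z, a + t * r) | x a t. (x, a) \<in> G}"
  have "G \<subseteq> ?G'" by force
  moreover have "(z, r) \<in> ?G'" using \<open>(0, 0) \<in> G\<close> by force
  ultimately show ?thesis using dominated_linear_graph_adjoin[OF G z r_lower r_upper] z by blast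
qed

lemma exists_total_dominated_linear_graph:
  assumes "dominated_linear_graph G0" "(0, 0) \<in> G0"
  shows "\<exists>G. dominated_linear_graph G \<and> G0 \<subseteq> G \<and> (\<forall>x. \<exists>a. (x, a) \<in> G)"
proof -
  have "\<exists>G\<in>{G. dominated_linear_graph G \<and> G0 \<subseteq> G}.
      \<forall>G'\<in>{G. dominated_linear_graph G \<and> G0 \<subseteq> G}. G \<subseteq> G' \<longrightarrow> G' = G"
  proof (intro subset_Zorn_nonempty)
    fix C assume C: "C \<noteq> {}" "subset.chain {G. dominated_linear_graph G \<and> G0 \<subseteq> G} C"
    then have "dominated_linear_graph (\<Union>C)"
      by (intro dominated_linear_graph_Union[OF C(2)]) (auto simp: subset.chain_def)
    moreover have "G0 \<subseteq> \<Union>C" using C unfolding subset.chain_def by blast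
    ultimately show "\<Union>C \<in> {G. dominated_linear_graph G \<and> G0 \<subseteq> G}" by simp
  qed (use assms in auto)
  then obtain G where G: "dominated_linear_graph G" "G0 \<subseteq> G"
    and maximal: "\<And>G'. dominated_linear_graph G' \<Longrightarrow> G \<subseteq> G' \<Longrightarrow> G' = G"
    by auto
  have "(0, 0) \<in> G" using G(2) assms(2) by blast
  have "\<exists>a. (x, a) \<in> G" for x
  proof (rule ccontr)
    assume "\<nexists>a. (x, a) \<in> G"
    then obtain G' where "dominated_linear_graph G'" "G \<subset> G'"
      using dominated_linear_graph_extend[OF G(1) \<open>(0, 0) \<in> G\<close>] by blast
    then show False using maximal[of G'] by (simp add: less_le)
  qed
  then show ?thesis using G by blast
qed

lemma exists_norming_functional:
  fixes x0 :: "'x::real_normed_vector"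
  assumes "x0 \<noteq> 0"
  obtains \<phi> :: "'x \<Rightarrow> real" where "linear \<phi>" "\<And>x. \<bar>\<phi> x\<bar> \<le> norm x" "\<phi> x0 = norm x0"
proof -
  define G0 where "G0 = range (\<lambda>c. (c *\<^sub>R x0, c * norm x0))"
  have G0: "dominated_linear_graph G0"
    unfolding dominated_linear_graph_def G0_def
  proof (intro conjI allI impI; clarify)
    fix c c' assume "c *\<^sub>R x0 = c' *\<^sub>R x0"
    then show "c * norm x0 = c' * norm x0" using assms by simp
  next
    fix c c' show "(c *\<^sub>R x0 + c' *\<^sub>R x0, c * norm x0 + c' * norm x0) \<in> range (\<lambda>c. (c *\<^sub>R x0, c * norm x0))"
      by (rule range_eqI[of _ _ "c + c'"]) (simp add: algebra_simps)
  next
    fix c c' show "(c' *\<^sub>R c *\<^sub>R x0, c' * (c * norm x0)) \<in> range (\<lambda>c. (c *\<^sub>R x0, c * norm x0))"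
      by (rule range_eqI[of _ _ "c' * c"]) simp
  qed (simp add: mult_right_mono)
  have "(0 *\<^sub>R x0, 0 * norm x0) \<in> G0" unfolding G0_def by blast
  then have "(0, 0) \<in> G0" by simp
  then obtain G where G: "dominated_linear_graph G" "G0 \<subseteq> G" and total: "\<And>x. \<exists>a. (x, a) \<in> G"
    using exists_total_dominated_linear_graph[OF G0] by blast
  define \<phi> where "\<phi> x = (THE a. (x, a) \<in> G)" for x
  have graph: "(x, a) \<in> G \<longleftrightarrow> a = \<phi> x" for x a
  proof -
    obtain b where "(x, b) \<in> G" using total by blast
    moreover from this have "\<phi> x = b"
      unfolding \<phi>_def using dominated_linear_graph_unique[OF G(1)] by blast
    ultimately show ?thesis using dominated_linear_graph_unique[OF G(1)] by blast
  qed
  have on_graph: "(x, \<phi> x) \<in> G" for x using graph by simp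
  have add: "\<phi> (x + y) = \<phi> x + \<phi> y" and scale: "\<phi> (c *\<^sub>R x) = c * \<phi> x" for x y c
    using dominated_linear_graph_add[OF G(1) on_graph on_graph] dominated_linear_graph_scale[OF G(1) on_graph]
    by (simp_all add: graph)
  show ?thesis
  proof
    show "linear \<phi>" by (rule linearI) (simp_all add: add scale)
    show "\<bar>\<phi> x\<bar> \<le> norm x" for x
      using dominated_linear_graph_le_norm[OF G(1) on_graph, of x]
        dominated_linear_graph_le_norm[OF G(1) on_graph, of "- x"] scale[of "-1" x] by simp
    have "(1 *\<^sub>R x0, 1 * norm x0) \<in> G" using G(2) unfolding G0_def by blast
    then show "\<phi> x0 = norm x0" using graph by simp
  qed
qed

lemma exists_unit_norming_functional:
  assumes "\<exists>x::'x::real_normed_vector. x \<noteq> 0"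
  obtains x0 :: "'x::real_normed_vector" and \<phi> :: "'x \<Rightarrow> real"
  where "norm x0 = 1" "linear \<phi>" "\<And>x. \<bar>\<phi> x\<bar> \<le> norm x" "\<phi> x0 = 1"
proof -
  obtain x :: 'x where "x \<noteq> 0" using assms by blast
  then have "sgn x \<noteq> 0" "norm (sgn x) = 1" by (simp_all add: sgn_zero_iff norm_sgn)
  obtain \<phi> :: "'x \<Rightarrow> real" where "linear \<phi>" "\<And>x. \<bar>\<phi> x\<bar> \<le> norm x" "\<phi> (sgn x) = norm (sgn x)"
    using exists_norming_functional[OF \<open>sgn x \<noteq> 0\<close>] by blast
  then show ?thesis using that[of "sgn x" \<phi>] \<open>norm (sgn x) = 1\<close> by simp
qed

section \<open>The Lipschitz-free space\<close>

lemma eq_0_if_abs_le_all_pos: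
  fixes z C :: real
  assumes "\<And>e. e > 0 \<Longrightarrow> \<bar>z\<bar> \<le> C * e"
  shows "z = 0"
proof (rule ccontr)
  assume "z \<noteq> 0"
  define e where "e = \<bar>z\<bar> / (2 * (\<bar>C\<bar> + 1))"
  have e: "e > 0" using \<open>z \<noteq> 0\<close> by (simp add: e_def add_pos_nonneg)
  have "C * e \<le> \<bar>C\<bar> * e" using e by (intro mult_right_mono) auto
  also have "\<dots> < (\<bar>C\<bar> + 1) * e" using e by simp
  also have "\<dots> = \<bar>z\<bar> / 2"
    using abs_ge_zero[of C] unfolding e_def by (simp add: field_simps add_nonneg_pos)
  finally show False using assms[OF e] by simp
qed

lemma sum_lessThan_add:
  fixes h :: "nat \<Rightarrow> 'a::comm_monoid_add"
  shows "(\<Sum>i<m + n. h i) = (\<Sum>i<m. h i) + (\<Sum>i<n. h (m + i))"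
  by (induction n) (simp_all add: add.assoc)

lemma abs_dist_diff_le_dist: "\<bar>dist s c - dist t c\<bar> \<le> dist s t"
  using abs_dist_diff_le[of s c t] by (simp add: dist_commute)

lemma lip0_ball_iff: "f \<in> lip0_ball p0 \<longleftrightarrow> f p0 = 0 \<and> (\<forall>s t. \<bar>f s - f t\<bar> \<le> dist s t)"
  unfolding lip0_ball_def lipschitz_on_def by (auto simp: dist_real_def)

lemma lip0_ball_abs_le: "f \<in> lip0_ball p0 \<Longrightarrow> \<bar>f t\<bar> \<le> dist t p0"
  unfolding lip0_ball_iff by (metis diff_zero)

lemma zero_in_lip0_ball: "(\<lambda>t. 0) \<in> lip0_ball p0"
  unfolding lip0_ball_iff by simp

lemma divide_in_lip0_ball:
  assumes "g p0 = 0" "\<And>s t. \<bar>g s - g t\<bar> \<le> L * dist s t" "L \<le> c" "0 < c"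
  shows "(\<lambda>t. g t / c) \<in> lip0_ball p0"
  unfolding lip0_ball_iff
proof (intro conjI allI)
  fix s t
  have "\<bar>g s - g t\<bar> \<le> c * dist s t"
    using assms(2)[of s t] mult_right_mono[OF assms(3) zero_le_dist[of s t]] by linarith
  then show "\<bar>g s / c - g t / c\<bar> \<le> dist s t"
    using assms(4) by (simp add: abs_div pos_divide_le_eq mult.commute flip: diff_divide_distrib)
qed (use assms in simp)

definition point_eval :: "'m \<Rightarrow> ('m \<Rightarrow> real) \<Rightarrow> real" where
  "point_eval p = (\<lambda>f. f p)"

definition free_comb :: "nat \<Rightarrow> (nat \<Rightarrow> real) \<Rightarrow> (nat \<Rightarrow> 'm) \<Rightarrow> ('m \<Rightarrow> real) \<Rightarrow> real" where
  "free_comb n a p = (\<lambda>f. \<Sum>i<n. a i * f (p i))"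

lemma free_comb_Suc:
  "free_comb (Suc n) a p = (\<lambda>f. 1 * free_comb n a p f + a n * point_eval (p n) f)"
  unfolding free_comb_def point_eval_def by simp

lemma free_comb_in_free_space: "free_comb n a p \<in> free_space p0"
  unfolding free_space_def free_comb_def
  by (intro CollectI allI impI exI[of _ n] exI[of _ a] exI[of _ p]) simp

lemma point_eval_in_free_space: "point_eval p \<in> free_space p0"
proof -
  have "point_eval p = free_comb 1 (\<lambda>_. 1) (\<lambda>_. p)" unfolding point_eval_def free_comb_def by simp
  then show ?thesis using free_comb_in_free_space by metis
qed

lemma free_space_approx:
  assumes "mu \<in> free_space p0" "e > 0"
  obtains n a p where "\<And>f. f \<in> lip0_ball p0 \<Longrightarrow> \<bar>mu f - free_comb n a p f\<bar> \<le> e"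
  using assms unfolding free_space_def free_comb_def by blast

lemma free_space_lincomb:
  assumes mu: "mu \<in> free_space p0" and nu: "nu \<in> free_space p0"
  shows "(\<lambda>f. a * mu f + b * nu f) \<in> free_space p0"
  unfolding free_space_def
proof (intro CollectI allI impI)
  fix e :: real assume "e > 0"
  define e' where "e' = e / (\<bar>a\<bar> + \<bar>b\<bar> + 1)"
  have e': "e' > 0" using \<open>e > 0\<close> by (simp add: e'_def add_nonneg_pos)
  obtain n1 a1 p1 where approx1: "\<And>f. f \<in> lip0_ball p0 \<Longrightarrow> \<bar>mu f - free_comb n1 a1 p1 f\<bar> \<le> e'"
    using free_space_approx[OF mu e'] by blast
  obtain n2 a2 p2 where approx2: "\<And>f. f \<in> lip0_ball p0 \<Longrightarrow> \<bar>nu f - free_comb n2 a2 p2 f\<bar> \<le> e'"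
    using free_space_approx[OF nu e'] by blast
  define c where "c i = (if i < n1 then a * a1 i else b * a2 (i - n1))" for i
  define q where "q i = (if i < n1 then p1 i else p2 (i - n1))" for i
  have concat: "(\<Sum>i<n1 + n2. c i * f (q i)) = a * free_comb n1 a1 p1 f + b * free_comb n2 a2 p2 f" for f
    unfolding sum_lessThan_add free_comb_def c_def q_def by (simp add: sum_distrib_left mult.assoc)
  have close: "\<bar>a * mu f + b * nu f - (\<Sum>i<n1 + n2. c i * f (q i))\<bar> \<le> e" if f: "f \<in> lip0_ball p0" for f
  proof -
    have "\<bar>a * mu f + b * nu f - (\<Sum>i<n1 + n2. c i * f (q i))\<bar>
        \<le> \<bar>a\<bar> * \<bar>mu f - free_comb n1 a1 p1 f\<bar> + \<bar>b\<bar> * \<bar>nu f - free_comb n2 a2 p2 f\<bar>"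
      unfolding concat by (simp flip: abs_mult add: algebra_simps abs_triangle_ineq[THEN order_trans])
    also have "\<dots> \<le> \<bar>a\<bar> * e' + \<bar>b\<bar> * e'"
      using approx1[OF f] approx2[OF f] by (intro add_mono mult_left_mono) auto
    also have "\<dots> \<le> (\<bar>a\<bar> + \<bar>b\<bar> + 1) * e'" using e' by (simp add: algebra_simps)
    also have "\<dots> = e" unfolding e'_def by (simp add: add_nonneg_pos)
    finally show ?thesis .
  qed
  show "\<exists>(n::nat) c q. \<forall>f\<in>lip0_ball p0. \<bar>a * mu f + b * nu f - (\<Sum>i<n. c i * f (q i))\<bar> \<le> e"
    using close by blast
qed

lemma free_space_scale: "mu \<in> free_space p0 \<Longrightarrow> (\<lambda>f. c * mu f) \<in> free_space p0"
  using free_space_lincomb[of mu p0 mu c 0] by simp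

lemma free_space_bounded_on_lip0_ball:
  assumes "mu \<in> free_space p0"
  shows "bdd_above {\<bar>mu f\<bar> | f. f \<in> lip0_ball p0}"
proof -
  obtain n a p where approx: "\<And>f. f \<in> lip0_ball p0 \<Longrightarrow> \<bar>mu f - free_comb n a p f\<bar> \<le> 1"
    using free_space_approx[OF assms, of 1] by auto
  have "\<bar>mu f\<bar> \<le> 1 + (\<Sum>i<n. \<bar>a i\<bar> * dist (p i) p0)" if f: "f \<in> lip0_ball p0" for f
  proof -
    have "\<bar>free_comb n a p f\<bar> \<le> (\<Sum>i<n. \<bar>a i * f (p i)\<bar>)" unfolding free_comb_def by (rule sum_abs)
    also have "\<dots> \<le> (\<Sum>i<n. \<bar>a i\<bar> * dist (p i) p0)"
      by (intro sum_mono) (simp add: abs_mult mult_left_mono lip0_ball_abs_le[OF f])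
    finally show ?thesis using approx[OF f] by linarith
  qed
  then show ?thesis unfolding bdd_above_def by blast
qed

lemma lipdual_norm_ge:
  assumes "mu \<in> free_space p0" "f \<in> lip0_ball p0"
  shows "\<bar>mu f\<bar> \<le> lipdual_norm p0 mu"
  unfolding lipdual_norm_def
  by (rule cSup_upper[OF _ free_space_bounded_on_lip0_ball[OF assms(1)]]) (use assms(2) in blast)

lemma lipdual_norm_nonneg: "mu \<in> free_space p0 \<Longrightarrow> 0 \<le> lipdual_norm p0 mu"
  using lipdual_norm_ge[OF _ zero_in_lip0_ball] by fastforce

lemma lipdual_norm_le:
  assumes "\<And>f. f \<in> lip0_ball p0 \<Longrightarrow> \<bar>mu f\<bar> \<le> c"
  shows "lipdual_norm p0 mu \<le> c"
  unfolding lipdual_norm_def by (rule cSup_least) (use zero_in_lip0_ball assms in auto)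

lemma lipdual_norm_point_eval_base: "lipdual_norm p0 (point_eval p0) = 0"
proof (rule antisym)
  show "lipdual_norm p0 (point_eval p0) \<le> 0"
    by (rule lipdual_norm_le) (simp add: point_eval_def lip0_ball_iff)
qed (rule lipdual_norm_nonneg[OF point_eval_in_free_space])

lemma free_space_linear_on_lip0_ball:
  assumes mu: "mu \<in> free_space p0" and "f \<in> lip0_ball p0" "g \<in> lip0_ball p0"
    and "(\<lambda>t. a * f t + b * g t) \<in> lip0_ball p0"
  shows "mu (\<lambda>t. a * f t + b * g t) = a * mu f + b * mu g"
proof -
  let ?h = "\<lambda>t. a * f t + b * g t"
  have "mu ?h - (a * mu f + b * mu g) = 0"
  proof (rule eq_0_if_abs_le_all_pos)
    fix e :: real assume "e > 0"
    then obtain n c p where approx: "\<And>k. k \<in> lip0_ball p0 \<Longrightarrow> \<bar>mu k - free_comb n c p k\<bar> \<le> e"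
      using free_space_approx[OF mu] by blast
    have comb: "free_comb n c p ?h = a * free_comb n c p f + b * free_comb n c p g"
      unfolding free_comb_def by (simp add: algebra_simps sum.distrib sum_distrib_left)
    have "\<bar>mu ?h - (a * mu f + b * mu g)\<bar>
       \<le> \<bar>mu ?h - free_comb n c p ?h\<bar> + \<bar>a\<bar> * \<bar>mu f - free_comb n c p f\<bar> + \<bar>b\<bar> * \<bar>mu g - free_comb n c p g\<bar>"
      unfolding comb by (simp flip: abs_mult add: algebra_simps abs_triangle_ineq[THEN order_trans]
          abs_triangle_ineq4[THEN order_trans])
    also have "\<dots> \<le> e + \<bar>a\<bar> * e + \<bar>b\<bar> * e"
      using approx assms by (intro add_mono mult_left_mono) auto
    finally show "\<bar>mu ?h - (a * mu f + b * mu g)\<bar> \<le> (1 + \<bar>a\<bar> + \<bar>b\<bar>) * e"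
      by (simp add: algebra_simps)
  qed
  then show ?thesis by simp
qed

lemma free_space_rescaled_lincomb:
  assumes mu: "mu \<in> free_space p0" and "c1 > 0" "c2 > 0" "c > 0"
    and f: "(\<lambda>t. f t / c1) \<in> lip0_ball p0" and g: "(\<lambda>t. g t / c2) \<in> lip0_ball p0"
    and fg: "(\<lambda>t. (a * f t + b * g t) / c) \<in> lip0_ball p0"
  shows "c * mu (\<lambda>t. (a * f t + b * g t) / c) = a * (c1 * mu (\<lambda>t. f t / c1)) + b * (c2 * mu (\<lambda>t. g t / c2))"
proof -
  have eq: "(\<lambda>t. (a * f t + b * g t) / c) = (\<lambda>t. (a * c1 / c) * (f t / c1) + (b * c2 / c) * (g t / c2))"
    using assms by (simp add: field_simps)
  show ?thesis
    unfolding eq free_space_linear_on_lip0_ball[OF mu f g fg[unfolded eq]]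
    using assms by (simp add: field_simps)
qed

lemma free_space_apply_zero:
  assumes "mu \<in> free_space p0"
  shows "mu (\<lambda>t. 0) = 0"
  using free_space_linear_on_lip0_ball[OF assms zero_in_lip0_ball zero_in_lip0_ball, of 0 0]
  by (simp add: zero_in_lip0_ball)

text \<open>For s = t the division by zero makes the molecule 0.\<close>

definition molecule :: "'m::metric_space \<Rightarrow> 'm \<Rightarrow> ('m \<Rightarrow> real) \<Rightarrow> real" where
  "molecule s t = (\<lambda>f. (1 / dist s t) * point_eval s f + (- 1 / dist s t) * point_eval t f)"

lemma molecule_in_free_space: "molecule s t \<in> free_space p0"
  unfolding molecule_def by (rule free_space_lincomb[OF point_eval_in_free_space point_eval_in_free_space])

lemma lipdual_norm_molecule_le: "lipdual_norm p0 (molecule s t) \<le> 1"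
proof (rule lipdual_norm_le)
  fix f assume "f \<in> lip0_ball p0"
  then have "\<bar>f s - f t\<bar> / dist s t \<le> 1" unfolding lip0_ball_iff by (simp add: divide_le_eq_1)
  then show "\<bar>molecule s t f\<bar> \<le> 1"
    unfolding molecule_def point_eval_def by (simp add: abs_div flip: diff_divide_distrib)
qed

section \<open>Bounded bilinear forms on the free space times X\<close>

lemma ptensor_dualD:
  assumes "B \<in> ptensor_dual p0" and "mu \<in> free_space p0"
  shows ptensor_dual_add_right: "B mu (x + y) = B mu x + B mu y"
    and ptensor_dual_scale_right: "B mu (c *\<^sub>R x) = c * B mu x"
    and ptensor_dual_add_left: "nu \<in> free_space p0 \<Longrightarrow> B (\<lambda>f. mu f + nu f) x = B mu x + B nu x"
    and ptensor_dual_scale_left: "B (\<lambda>f. c * mu f) x = c * B mu x"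
  using assms unfolding ptensor_dual_def by blast+

lemma ptensor_dual_bound:
  assumes "B \<in> ptensor_dual p0"
  obtains K where "K \<ge> 0" "\<And>mu x. mu \<in> free_space p0 \<Longrightarrow> \<bar>B mu x\<bar> \<le> K * lipdual_norm p0 mu * norm x"
proof -
  obtain K where K: "\<And>mu x. mu \<in> free_space p0 \<Longrightarrow> \<bar>B mu x\<bar> \<le> K * lipdual_norm p0 mu * norm x"
    using assms unfolding ptensor_dual_def by blast
  have "\<bar>B mu x\<bar> \<le> \<bar>K\<bar> * lipdual_norm p0 mu * norm x" if "mu \<in> free_space p0" for mu x
  proof -
    have "K * lipdual_norm p0 mu * norm x \<le> \<bar>K\<bar> * lipdual_norm p0 mu * norm x"
      using lipdual_norm_nonneg[OF that] by (intro mult_right_mono) auto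
    then show ?thesis using K[OF that, of x] by linarith
  qed
  then show ?thesis using that[of "\<bar>K\<bar>"] by simp
qed

lemma ptensor_dual_lincomb_left:
  assumes B: "B \<in> ptensor_dual p0" and mu: "mu \<in> free_space p0" and nu: "nu \<in> free_space p0"
  shows "B (\<lambda>f. a * mu f + b * nu f) x = a * B mu x + b * B nu x"
  using ptensor_dual_add_left[OF B free_space_scale[OF mu] free_space_scale[OF nu]]
    ptensor_dual_scale_left[OF B mu] ptensor_dual_scale_left[OF B nu] by simp

lemma ptensor_dual_free_comb:
  assumes B: "B \<in> ptensor_dual p0"
  shows "B (free_comb n a p) x = (\<Sum>i<n. a i * B (point_eval (p i)) x)"
proof (induction n)
  case 0
  have "free_comb 0 a p = (\<lambda>f. 0 * point_eval p0 f)" unfolding free_comb_def by simp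
  then show ?case using ptensor_dual_scale_left[OF B point_eval_in_free_space, where c=0] by simp
next
  case (Suc n)
  show ?case
    unfolding free_comb_Suc ptensor_dual_lincomb_left[OF B free_comb_in_free_space point_eval_in_free_space] Suc
    by simp
qed

lemma ptensor_dual_point_eval_base:
  assumes "B \<in> ptensor_dual p0"
  shows "B (point_eval p0) x = 0"
proof -
  obtain K where K: "\<And>mu x. mu \<in> free_space p0 \<Longrightarrow> \<bar>B mu x\<bar> \<le> K * lipdual_norm p0 mu * norm x"
    using assms unfolding ptensor_dual_def by blast
  from K[OF point_eval_in_free_space[of p0 p0], of x] show ?thesis
    using lipdual_norm_point_eval_base[of p0] by simp
qed

text \<open>A bounded bilinear form is determined by its values on the point evaluations: this is the
  identification of the dual of the projective tensor product with Lip_0(M, X*).\<close>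

lemma ptensor_dual_eq_via_point_evals:
  assumes B: "B \<in> ptensor_dual p0" and "L > 0"
    and lip: "\<And>s t. \<bar>B (point_eval s) x - B (point_eval t) x\<bar> \<le> L * dist s t"
    and mu: "mu \<in> free_space p0"
  shows "B mu x = L * mu (\<lambda>t. B (point_eval t) x / L)"
proof -
  define g where "g = (\<lambda>t. B (point_eval t) x / L)"
  have g: "g \<in> lip0_ball p0" unfolding g_def
    by (rule divide_in_lip0_ball) (use ptensor_dual_point_eval_base[OF B] lip \<open>L > 0\<close> in auto)
  obtain K where "K \<ge> 0" and K: "\<And>mu x. mu \<in> free_space p0 \<Longrightarrow> \<bar>B mu x\<bar> \<le> K * lipdual_norm p0 mu * norm x"
    using ptensor_dual_bound[OF B] by metis
  have "B mu x - L * mu g = 0"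
  proof (rule eq_0_if_abs_le_all_pos)
    fix e :: real assume "e > 0"
    then obtain n a p where approx: "\<And>f. f \<in> lip0_ball p0 \<Longrightarrow> \<bar>mu f - free_comb n a p f\<bar> \<le> e"
      using free_space_approx[OF mu] by blast
    define nu where "nu = (\<lambda>f. 1 * mu f + (-1) * free_comb n a p f)"
    have nu: "nu \<in> free_space p0" unfolding nu_def by (rule free_space_lincomb[OF mu free_comb_in_free_space])
    have "lipdual_norm p0 nu \<le> e" by (rule lipdual_norm_le) (simp add: nu_def approx)
    then have "K * lipdual_norm p0 nu * norm x \<le> K * e * norm x"
      using \<open>K \<ge> 0\<close> by (intro mult_right_mono mult_left_mono) auto
    then have small: "\<bar>B nu x\<bar> \<le> K * e * norm x" using K[OF nu, of x] by linarith
    have "mu = (\<lambda>f. 1 * free_comb n a p f + 1 * nu f)" unfolding nu_def by simp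
    then have "B mu x = B (free_comb n a p) x + B nu x"
      using ptensor_dual_lincomb_left[OF B free_comb_in_free_space nu, of 1 n a p 1 x] by simp
    moreover have "B (free_comb n a p) x = L * free_comb n a p g"
      unfolding ptensor_dual_free_comb[OF B] using \<open>L > 0\<close>
      by (simp add: free_comb_def g_def sum_distrib_left)
    ultimately have "B mu x - L * mu g = B nu x - L * (mu g - free_comb n a p g)" by (simp add: algebra_simps)
    moreover have "\<bar>L * (mu g - free_comb n a p g)\<bar> \<le> L * e"
      using approx[OF g] \<open>L > 0\<close> by (simp add: abs_mult)
    ultimately show "\<bar>B mu x - L * mu g\<bar> \<le> (K * norm x + L) * e"
      using small by (simp add: algebra_simps abs_triangle_ineq4[THEN order_trans])
  qed
  then show ?thesis unfolding g_def by simp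
qed

lemma ptensor_dual_norm_bdd:
  assumes "B \<in> ptensor_dual p0"
  shows "bdd_above {\<bar>B mu x\<bar> | mu x. mu \<in> free_space p0 \<and> lipdual_norm p0 mu \<le> 1 \<and> norm x \<le> 1}"
proof -
  obtain K where "K \<ge> 0" and K: "\<And>mu x. mu \<in> free_space p0 \<Longrightarrow> \<bar>B mu x\<bar> \<le> K * lipdual_norm p0 mu * norm x"
    using ptensor_dual_bound[OF assms] by metis
  have "\<bar>B mu x\<bar> \<le> K" if "mu \<in> free_space p0" "lipdual_norm p0 mu \<le> 1" "norm x \<le> 1" for mu x
  proof -
    have "K * lipdual_norm p0 mu * norm x \<le> K * 1 * 1"
      using that \<open>K \<ge> 0\<close> lipdual_norm_nonneg[OF that(1)] by (intro mult_mono) auto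
    then show ?thesis using K[OF that(1), of x] by simp
  qed
  then show ?thesis unfolding bdd_above_def by blast
qed

lemma ptensor_dual_norm_ge:
  assumes "B \<in> ptensor_dual p0" "mu \<in> free_space p0" "lipdual_norm p0 mu \<le> 1" "norm x \<le> 1"
  shows "\<bar>B mu x\<bar> \<le> ptensor_dual_norm p0 B"
  unfolding ptensor_dual_norm_def
  by (rule cSup_upper[OF _ ptensor_dual_norm_bdd[OF assms(1)]]) (use assms in blast)

lemma ptensor_dual_norm_nonneg: "B \<in> ptensor_dual p0 \<Longrightarrow> 0 \<le> ptensor_dual_norm p0 B"
  using ptensor_dual_norm_ge[OF _ point_eval_in_free_space, of B p0 p0 0]
    lipdual_norm_point_eval_base[of p0] by simp

lemma ptensor_dual_norm_le:
  assumes "\<And>mu x. mu \<in> free_space p0 \<Longrightarrow> lipdual_norm p0 mu \<le> 1 \<Longrightarrow> norm x \<le> 1 \<Longrightarrow> \<bar>B mu x\<bar> \<le> c"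
  shows "ptensor_dual_norm p0 B \<le> c"
  unfolding ptensor_dual_norm_def
proof (rule cSup_least)
  show "{\<bar>B mu x\<bar> | mu x. mu \<in> free_space p0 \<and> lipdual_norm p0 mu \<le> 1 \<and> norm x \<le> 1} \<noteq> {}"
    using point_eval_in_free_space[of p0 p0] lipdual_norm_point_eval_base[of p0]
    by (intro ex_in_conv[THEN iffD1]) (rule exI, rule CollectI, rule exI[of _ "point_eval p0"], rule exI[of _ 0], simp)
qed (use assms in auto)

lemma ptensor_dual_norm_le_lipschitz:
  assumes B: "B \<in> ptensor_dual p0" and "L > 0"
    and lip: "\<And>s t x. \<bar>B (point_eval s) x - B (point_eval t) x\<bar> \<le> L * dist s t * norm x"
  shows "ptensor_dual_norm p0 B \<le> L"
proof (rule ptensor_dual_norm_le)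
  fix mu and x :: 'b assume mu: "mu \<in> free_space p0" "lipdual_norm p0 mu \<le> 1" and "norm x \<le> 1"
  have lip_x: "\<bar>B (point_eval s) x - B (point_eval t) x\<bar> \<le> L * dist s t" for s t
  proof -
    have "L * dist s t * norm x \<le> L * dist s t"
      using \<open>norm x \<le> 1\<close> \<open>L > 0\<close> by (simp add: mult_left_le)
    then show ?thesis using lip[of s x t] by linarith
  qed
  define g where "g = (\<lambda>t. B (point_eval t) x / L)"
  have g: "g \<in> lip0_ball p0" unfolding g_def
    by (rule divide_in_lip0_ball) (use ptensor_dual_point_eval_base[OF B] lip_x \<open>L > 0\<close> in auto)
  have "\<bar>B mu x\<bar> = L * \<bar>mu g\<bar>"
    using ptensor_dual_eq_via_point_evals[OF B \<open>L > 0\<close> lip_x mu(1)] \<open>L > 0\<close> by (simp add: g_def abs_mult)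
  also have "\<dots> \<le> L * 1"
    using lipdual_norm_ge[OF mu(1) g] mu(2) \<open>L > 0\<close> by (intro mult_left_mono) auto
  finally show "\<bar>B mu x\<bar> \<le> L" by simp
qed

lemma ptensor_dual_molecule:
  assumes "B \<in> ptensor_dual p0"
  shows "B (molecule s t) x = (B (point_eval s) x - B (point_eval t) x) / dist s t"
  unfolding molecule_def ptensor_dual_lincomb_left[OF assms point_eval_in_free_space point_eval_in_free_space]
  by (simp add: diff_divide_distrib)

lemma ptensor_dual_point_eval_lipschitz:
  assumes B: "B \<in> ptensor_dual p0" and "ptensor_dual_norm p0 B \<le> 1"
  shows "\<bar>B (point_eval s) x - B (point_eval t) x\<bar> \<le> dist s t * norm x"
proof (cases "s = t \<or> x = 0")
  case True
  then show ?thesis using ptensor_dual_scale_right[OF B point_eval_in_free_space, of _ 0 0] by auto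
next
  case False
  then have "dist s t > 0" and "norm x > 0" by auto
  have "norm ((1 / norm x) *\<^sub>R x) \<le> 1" using \<open>norm x > 0\<close> by simp
  then have "\<bar>B (molecule s t) ((1 / norm x) *\<^sub>R x)\<bar> \<le> ptensor_dual_norm p0 B"
    by (rule ptensor_dual_norm_ge[OF B molecule_in_free_space lipdual_norm_molecule_le])
  then have "\<bar>B (molecule s t) ((1 / norm x) *\<^sub>R x)\<bar> \<le> 1" using assms(2) by linarith
  moreover have "B (molecule s t) ((1 / norm x) *\<^sub>R x) = (B (point_eval s) x - B (point_eval t) x) / (dist s t * norm x)"
    unfolding ptensor_dual_molecule[OF B] ptensor_dual_scale_right[OF B point_eval_in_free_space]
    using \<open>dist s t > 0\<close> \<open>norm x > 0\<close> by (simp add: field_simps)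
  ultimately show ?thesis
    using \<open>dist s t > 0\<close> \<open>norm x > 0\<close> by (simp add: abs_div divide_le_eq mult.commute)
qed

lemma ptensor_dual_zero: "(\<lambda>mu x. 0) \<in> ptensor_dual p0"
  unfolding ptensor_dual_def by (auto intro!: exI[of _ 0])

lemma ptensor_dual_add:
  assumes "B \<in> ptensor_dual p0" "C \<in> ptensor_dual p0"
  shows "(\<lambda>mu x. B mu x + C mu x) \<in> ptensor_dual p0"
proof -
  obtain K1 where K1: "\<And>mu x. mu \<in> free_space p0 \<Longrightarrow> \<bar>B mu x\<bar> \<le> K1 * lipdual_norm p0 mu * norm x"
    using assms(1) unfolding ptensor_dual_def by blast
  obtain K2 where K2: "\<And>mu x. mu \<in> free_space p0 \<Longrightarrow> \<bar>C mu x\<bar> \<le> K2 * lipdual_norm p0 mu * norm x"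
    using assms(2) unfolding ptensor_dual_def by blast
  have "\<bar>B mu x + C mu x\<bar> \<le> (K1 + K2) * lipdual_norm p0 mu * norm x" if "mu \<in> free_space p0" for mu x
    using K1[OF that, of x] K2[OF that, of x] by (simp add: algebra_simps abs_triangle_ineq[THEN order_trans])
  then have "\<exists>K. \<forall>mu\<in>free_space p0. \<forall>x. \<bar>B mu x + C mu x\<bar> \<le> K * lipdual_norm p0 mu * norm x" by blast
  then show ?thesis using assms unfolding ptensor_dual_def by (auto simp: algebra_simps)
qed

lemma ptensor_dual_scale:
  assumes "B \<in> ptensor_dual p0"
  shows "(\<lambda>mu x. c * B mu x) \<in> ptensor_dual p0"
proof -
  obtain K where K: "\<And>mu x. mu \<in> free_space p0 \<Longrightarrow> \<bar>B mu x\<bar> \<le> K * lipdual_norm p0 mu * norm x"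
    using assms unfolding ptensor_dual_def by blast
  have "\<bar>c * B mu x\<bar> \<le> (\<bar>c\<bar> * K) * lipdual_norm p0 mu * norm x" if "mu \<in> free_space p0" for mu x
    using K[OF that, of x] by (simp add: abs_mult mult_left_mono mult.assoc)
  then have "\<exists>K. \<forall>mu\<in>free_space p0. \<forall>x. \<bar>c * B mu x\<bar> \<le> K * lipdual_norm p0 mu * norm x" by blast
  then show ?thesis using assms unfolding ptensor_dual_def by (auto simp: algebra_simps)
qed

lemma ptensor_dual_sum:
  assumes "finite F" "\<And>k. k \<in> F \<Longrightarrow> B k \<in> ptensor_dual p0"
  shows "(\<lambda>mu x. \<Sum>k\<in>F. B k mu x) \<in> ptensor_dual p0"
  using assms
proof (induction F rule: finite_induct)
  case empty
  then show ?case using ptensor_dual_zero by simp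
next
  case (insert k F)
  then show ?case using ptensor_dual_add[of "B k" p0 "\<lambda>mu x. \<Sum>k\<in>F. B k mu x"] by simp
qed

definition lip0_dual_map :: "'m::metric_space \<Rightarrow> real \<Rightarrow> ('m \<Rightarrow> 'x::real_normed_vector \<Rightarrow> real) \<Rightarrow> bool" where
  "lip0_dual_map p0 L G \<longleftrightarrow> 0 \<le> L \<and> (\<forall>t. linear (G t)) \<and> (\<forall>x. G p0 x = 0) \<and>
     (\<forall>s t x. \<bar>G s x - G t x\<bar> \<le> L * dist s t * norm x)"

lemma lip0_dual_map_point_evals:
  assumes B: "B \<in> ptensor_dual p0" and "ptensor_dual_norm p0 B \<le> 1"
  shows "lip0_dual_map p0 1 (\<lambda>t. B (point_eval t))"
  unfolding lip0_dual_map_def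
proof (intro conjI allI)
  show "linear (B (point_eval t))" for t
    by (intro linearI) (simp_all add: ptensor_dual_add_right[OF B point_eval_in_free_space]
        ptensor_dual_scale_right[OF B point_eval_in_free_space])
qed (use ptensor_dual_point_eval_base[OF B] ptensor_dual_point_eval_lipschitz[OF assms] in auto)

text \<open>The bounded bilinear form on F(M) \<times> X induced by a Lipschitz map G : M \<rightarrow> X*. Elements
  of F(M) are only controlled on the unit ball of Lip_0(M), so G(-) x is first scaled into it; the
  summand 1 in the scaling factor avoids a case distinction at x = 0.\<close>

definition induced_form :: "real \<Rightarrow> ('m \<Rightarrow> 'x::real_normed_vector \<Rightarrow> real) \<Rightarrow> (('m \<Rightarrow> real) \<Rightarrow> real) \<Rightarrow> 'x \<Rightarrow> real" where
  "induced_form L G mu x = (L * norm x + 1) * mu (\<lambda>t. G t x / (L * norm x + 1))"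

lemma induced_form_point_eval:
  assumes "L \<ge> 0"
  shows "induced_form L G (point_eval t) x = G t x"
proof -
  have "L * norm x + 1 > 0" using assms by (simp add: add_nonneg_pos)
  then show ?thesis unfolding induced_form_def point_eval_def by simp
qed

lemma lip0_dual_map_divide_in_lip0_ball:
  assumes "lip0_dual_map p0 L G" "L * norm x \<le> c" "c > 0"
  shows "(\<lambda>t. G t x / c) \<in> lip0_ball p0"
  by (rule divide_in_lip0_ball[of _ _ "L * norm x"])
    (use assms in \<open>auto simp: lip0_dual_map_def mult.commute mult.left_commute\<close>)

lemma induced_form_linear_right:
  assumes G: "lip0_dual_map p0 L G" and mu: "mu \<in> free_space p0"
  shows "linear (induced_form L G mu)"
proof -
  have "L \<ge> 0" and lin: "\<And>t. linear (G t)" using G unfolding lip0_dual_map_def by auto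
  define C where "C x = L * norm x + 1" for x :: 'b
  have C: "C x > 0" "L * norm x \<le> C x" for x unfolding C_def using \<open>L \<ge> 0\<close> by (auto simp: add_nonneg_pos)
  note in_ball = lip0_dual_map_divide_in_lip0_ball[OF G C(2,1)]
  show ?thesis
  proof (rule linearI)
    fix x y
    have "C (x + y) * mu (\<lambda>t. (1 * G t x + 1 * G t y) / C (x + y))
        = 1 * (C x * mu (\<lambda>t. G t x / C x)) + 1 * (C y * mu (\<lambda>t. G t y / C y))"
      by (rule free_space_rescaled_lincomb[OF mu C(1) C(1) C(1) in_ball in_ball])
        (use in_ball[of "x + y"] in \<open>simp add: linear_add[OF lin]\<close>)
    then show "induced_form L G mu (x + y) = induced_form L G mu x + induced_form L G mu y"
      by (simp add: induced_form_def C_def linear_add[OF lin])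
  next
    fix c x
    have "C (c *\<^sub>R x) * mu (\<lambda>t. (c * G t x + 0 * G t x) / C (c *\<^sub>R x))
        = c * (C x * mu (\<lambda>t. G t x / C x)) + 0 * (C x * mu (\<lambda>t. G t x / C x))"
      by (rule free_space_rescaled_lincomb[OF mu C(1) C(1) C(1) in_ball in_ball])
        (use in_ball[of "c *\<^sub>R x"] in \<open>simp add: linear_scale[OF lin]\<close>)
    then show "induced_form L G mu (c *\<^sub>R x) = c *\<^sub>R induced_form L G mu x"
      by (simp add: induced_form_def C_def linear_scale[OF lin])
  qed
qed

lemma induced_form_bound:
  assumes G: "lip0_dual_map p0 L G" and mu: "mu \<in> free_space p0"
  shows "\<bar>induced_form L G mu x\<bar> \<le> L * lipdual_norm p0 mu * norm x"
proof (cases "L * norm x = 0")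
  case True
  have "G t x = 0" for t
  proof -
    have "\<bar>G t x - G p0 x\<bar> \<le> L * dist t p0 * norm x" and "G p0 x = 0"
      using G unfolding lip0_dual_map_def by blast+
    moreover have "L * dist t p0 * norm x = dist t p0 * (L * norm x)" by (simp add: ac_simps)
    ultimately show ?thesis using True by simp
  qed
  then have "induced_form L G mu x = (L * norm x + 1) * mu (\<lambda>t. 0)" by (simp add: induced_form_def)
  then show ?thesis using free_space_apply_zero[OF mu] True by auto
next
  case False
  have "L \<ge> 0" using G unfolding lip0_dual_map_def by auto
  with False have pos: "L * norm x > 0" by (simp add: less_le)
  have C: "L * norm x + 1 > 0" using pos by simp
  note in_ball = lip0_dual_map_divide_in_lip0_ball[OF G order_refl pos]
  have "(L * norm x + 1) * mu (\<lambda>t. (1 * G t x + 0 * G t x) / (L * norm x + 1))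
      = 1 * ((L * norm x) * mu (\<lambda>t. G t x / (L * norm x))) + 0 * ((L * norm x) * mu (\<lambda>t. G t x / (L * norm x)))"
    by (rule free_space_rescaled_lincomb[OF mu pos pos C in_ball in_ball])
      (use lip0_dual_map_divide_in_lip0_ball[OF G _ C] in simp)
  then have "induced_form L G mu x = (L * norm x) * mu (\<lambda>t. G t x / (L * norm x))"
    by (simp add: induced_form_def)
  also have "\<bar>\<dots>\<bar> = (L * norm x) * \<bar>mu (\<lambda>t. G t x / (L * norm x))\<bar>"
    using pos \<open>L \<ge> 0\<close> by (simp add: abs_mult)
  also have "\<dots> \<le> (L * norm x) * lipdual_norm p0 mu"
    using lipdual_norm_ge[OF mu in_ball] pos by (intro mult_left_mono) auto
  finally show ?thesis by (simp add: algebra_simps)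
qed

lemma induced_form_in_ptensor_dual:
  assumes G: "lip0_dual_map p0 L G"
  shows "induced_form L G \<in> ptensor_dual p0"
  unfolding ptensor_dual_def
proof (intro CollectI conjI ballI allI)
  fix mu x y assume "mu \<in> free_space p0"
  then show "induced_form L G mu (x + y) = induced_form L G mu x + induced_form L G mu y"
    by (rule linear_add[OF induced_form_linear_right[OF G]])
next
  fix mu c x assume "mu \<in> free_space p0"
  then show "induced_form L G mu (c *\<^sub>R x) = c * induced_form L G mu x"
    using linear_scale[OF induced_form_linear_right[OF G]] by simp
next
  fix mu nu x
  show "induced_form L G (\<lambda>f. mu f + nu f) x = induced_form L G mu x + induced_form L G nu x"
    unfolding induced_form_def by (simp add: distrib_left)
next
  fix mu c x
  show "induced_form L G (\<lambda>f. c * mu f) x = c * induced_form L G mu x"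
    unfolding induced_form_def by simp
next
  show "\<exists>K. \<forall>mu\<in>free_space p0. \<forall>x. \<bar>induced_form L G mu x\<bar> \<le> K * lipdual_norm p0 mu * norm x"
    using induced_form_bound[OF G] by blast
qed

section \<open>The bidual\<close>

lemma ptensor_bidualD:
  assumes "Phi \<in> ptensor_bidual p0" and "B \<in> ptensor_dual p0"
  shows ptensor_bidual_add: "C \<in> ptensor_dual p0 \<Longrightarrow> Phi (\<lambda>mu x. B mu x + C mu x) = Phi B + Phi C"
    and ptensor_bidual_scale: "Phi (\<lambda>mu x. c * B mu x) = c * Phi B"
  using assms unfolding ptensor_bidual_def by blast+

lemma ptensor_bidual_sum:
  assumes Phi: "Phi \<in> ptensor_bidual p0" and "finite F" "\<And>k. k \<in> F \<Longrightarrow> B k \<in> ptensor_dual p0"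
  shows "Phi (\<lambda>mu x. \<Sum>k\<in>F. B k mu x) = (\<Sum>k\<in>F. Phi (B k))"
  using assms(2,3)
proof (induction F rule: finite_induct)
  case empty
  show ?case using ptensor_bidual_scale[OF Phi ptensor_dual_zero, of 0] by simp
next
  case (insert k F)
  then have "Phi (\<lambda>mu x. B k mu x + (\<Sum>k\<in>F. B k mu x)) = Phi (B k) + Phi (\<lambda>mu x. \<Sum>k\<in>F. B k mu x)"
    by (intro ptensor_bidual_add[OF Phi] ptensor_dual_sum) auto
  with insert show ?case by simp
qed

lemma ptensor_bidual_bounded:
  assumes "Phi \<in> ptensor_bidual p0"
  obtains K where "\<And>B. B \<in> ptensor_dual p0 \<Longrightarrow> ptensor_dual_norm p0 B \<le> 1 \<Longrightarrow> \<bar>Phi B\<bar> \<le> K"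
proof -
  obtain K where K: "\<And>B. B \<in> ptensor_dual p0 \<Longrightarrow> \<bar>Phi B\<bar> \<le> K * ptensor_dual_norm p0 B"
    using assms unfolding ptensor_bidual_def by blast
  have "\<bar>Phi B\<bar> \<le> \<bar>K\<bar>" if "B \<in> ptensor_dual p0" "ptensor_dual_norm p0 B \<le> 1" for B
  proof -
    have "K * ptensor_dual_norm p0 B \<le> \<bar>K\<bar> * 1"
      using that ptensor_dual_norm_nonneg[OF that(1)] by (intro mult_mono) auto
    then show ?thesis using K[OF that(1)] by linarith
  qed
  then show ?thesis using that by blast
qed

lemma ptensor_bidual_norm_ge:
  assumes "Phi \<in> ptensor_bidual p0" "B \<in> ptensor_dual p0" "ptensor_dual_norm p0 B \<le> 1"
  shows "\<bar>Phi B\<bar> \<le> ptensor_bidual_norm p0 Phi"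
proof -
  obtain K where "\<And>B. B \<in> ptensor_dual p0 \<Longrightarrow> ptensor_dual_norm p0 B \<le> 1 \<Longrightarrow> \<bar>Phi B\<bar> \<le> K"
    using ptensor_bidual_bounded[OF assms(1)] by metis
  then have "bdd_above {\<bar>Phi B\<bar> | B. B \<in> ptensor_dual p0 \<and> ptensor_dual_norm p0 B \<le> 1}"
    unfolding bdd_above_def by blast
  then show ?thesis
    unfolding ptensor_bidual_norm_def by (rule cSup_upper[rotated]) (use assms(2,3) in blast)
qed

lemma ptensor_bidual_norm_le:
  assumes "\<And>B. B \<in> ptensor_dual p0 \<Longrightarrow> ptensor_dual_norm p0 B \<le> 1 \<Longrightarrow> \<bar>Phi B\<bar> \<le> c"
  shows "ptensor_bidual_norm p0 Phi \<le> c"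
  unfolding ptensor_bidual_norm_def
proof (rule cSup_least)
  have "ptensor_dual_norm p0 (\<lambda>mu x. 0) \<le> 1" by (rule ptensor_dual_norm_le) simp
  then show "{\<bar>Phi B\<bar> | B. B \<in> ptensor_dual p0 \<and> ptensor_dual_norm p0 B \<le> 1} \<noteq> {}"
    using ptensor_dual_zero by blast
qed (use assms in blast)

lemma ptensor_bidual_diff:
  assumes "Phi \<in> ptensor_bidual p0" "Psi \<in> ptensor_bidual p0"
  shows "(\<lambda>B. Phi B - Psi B) \<in> ptensor_bidual p0"
proof -
  obtain K1 where K1: "\<And>B. B \<in> ptensor_dual p0 \<Longrightarrow> \<bar>Phi B\<bar> \<le> K1 * ptensor_dual_norm p0 B"
    using assms(1) unfolding ptensor_bidual_def by blast
  obtain K2 where K2: "\<And>B. B \<in> ptensor_dual p0 \<Longrightarrow> \<bar>Psi B\<bar> \<le> K2 * ptensor_dual_norm p0 B"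
    using assms(2) unfolding ptensor_bidual_def by blast
  have "\<bar>Phi B - Psi B\<bar> \<le> (K1 + K2) * ptensor_dual_norm p0 B" if "B \<in> ptensor_dual p0" for B
    using K1[OF that] K2[OF that] by (simp add: algebra_simps abs_triangle_ineq4[THEN order_trans])
  then have "\<exists>K. \<forall>B\<in>ptensor_dual p0. \<bar>Phi B - Psi B\<bar> \<le> K * ptensor_dual_norm p0 B" by blast
  then show ?thesis
    using assms unfolding ptensor_bidual_def by (auto simp: algebra_simps)
qed

lemma ptensor_bidual_exists_almost_norming:
  assumes Phi: "Phi \<in> ptensor_bidual p0" and "ptensor_bidual_norm p0 Phi = 1" and "e > 0"
  obtains B where "B \<in> ptensor_dual p0" "ptensor_dual_norm p0 B \<le> 1" "Phi B > 1 - e"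
proof -
  obtain B where B: "B \<in> ptensor_dual p0" "ptensor_dual_norm p0 B \<le> 1" and "1 - e < \<bar>Phi B\<bar>"
  proof -
    have "\<not> ptensor_bidual_norm p0 Phi \<le> 1 - e" using assms by simp
    then show ?thesis using ptensor_bidual_norm_le[of p0 Phi "1 - e"] that by force
  qed
  show ?thesis
  proof (cases "Phi B \<ge> 0")
    case True
    then show ?thesis using that B \<open>1 - e < \<bar>Phi B\<bar>\<close> by simp
  next
    case False
    have "ptensor_dual_norm p0 (\<lambda>mu x. (-1) * B mu x) \<le> 1"
      using ptensor_dual_norm_ge[OF B(1)] B(2) by (intro ptensor_dual_norm_le) force
    moreover have "Phi (\<lambda>mu x. (-1) * B mu x) = - Phi B"
      using ptensor_bidual_scale[OF Phi B(1), of "-1"] by simp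
    ultimately show ?thesis
      using that[OF ptensor_dual_scale[OF B(1)], of "-1"] False \<open>1 - e < \<bar>Phi B\<bar>\<close> by simp
  qed
qed

definition elementary_tensor :: "(('m \<Rightarrow> real) \<Rightarrow> real) \<Rightarrow> 'x \<Rightarrow> ((('m \<Rightarrow> real) \<Rightarrow> real) \<Rightarrow> 'x \<Rightarrow> real) \<Rightarrow> real" where
  "elementary_tensor mu x = (\<lambda>B. B mu x)"

lemma elementary_tensor_in_ptensor_bidual:
  assumes "mu \<in> free_space p0" "lipdual_norm p0 mu \<le> 1" "norm x \<le> 1"
  shows "elementary_tensor mu x \<in> ptensor_bidual p0"
    and "ptensor_bidual_norm p0 (elementary_tensor mu x) \<le> 1"
proof -
  have bound: "\<bar>elementary_tensor mu x B\<bar> \<le> ptensor_dual_norm p0 B" if "B \<in> ptensor_dual p0" for B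
    unfolding elementary_tensor_def by (rule ptensor_dual_norm_ge[OF that assms])
  then have "\<exists>K. \<forall>B\<in>ptensor_dual p0. \<bar>elementary_tensor mu x B\<bar> \<le> K * ptensor_dual_norm p0 B"
    by (intro exI[of _ 1]) simp
  then show "elementary_tensor mu x \<in> ptensor_bidual p0"
    unfolding ptensor_bidual_def by (simp add: elementary_tensor_def)
  show "ptensor_bidual_norm p0 (elementary_tensor mu x) \<le> 1"
    by (rule ptensor_bidual_norm_le) (use bound in force)
qed

lemma molecule_tensor_in_ptensor_bidual:
  "norm x \<le> 1 \<Longrightarrow> elementary_tensor (molecule s t) x \<in> ptensor_bidual p0"
  by (rule elementary_tensor_in_ptensor_bidual(1)[OF molecule_in_free_space lipdual_norm_molecule_le])

lemma ptensor_bidual_norm_molecule_tensor: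
  assumes "c \<noteq> q" and "norm x0 = 1"
    and \<phi>: "linear \<phi>" "\<And>x. \<bar>\<phi> x\<bar> \<le> norm x" "\<phi> x0 = 1"
  shows "ptensor_bidual_norm p0 (elementary_tensor (molecule c q) x0) = 1"
proof (rule antisym)
  have "norm x0 \<le> 1" using \<open>norm x0 = 1\<close> by simp
  note tensor = elementary_tensor_in_ptensor_bidual[OF molecule_in_free_space lipdual_norm_molecule_le this]
  show "ptensor_bidual_norm p0 (elementary_tensor (molecule c q) x0) \<le> 1" by (rule tensor(2))
  txt \<open>The form induced by (d(-, q) - d(p0, q)) \<phi> norms the tensor.\<close>
  define G where "G t x = (dist t q - dist p0 q) * \<phi> x" for t x
  have G: "lip0_dual_map p0 1 G"
    unfolding lip0_dual_map_def
  proof (intro conjI allI)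
    show "linear (G t)" for t
      unfolding G_def by (intro linearI) (simp_all add: linear_add[OF \<phi>(1)] linear_scale[OF \<phi>(1)] algebra_simps)
    show "\<bar>G s x - G t x\<bar> \<le> 1 * dist s t * norm x" for s t x
      unfolding G_def abs_mult left_diff_distrib[symmetric]
      using abs_dist_diff_le_dist[of s q t] \<phi>(2) by (simp add: mult_mono)
  qed (simp_all add: G_def)
  have B0: "induced_form 1 G \<in> ptensor_dual p0" by (rule induced_form_in_ptensor_dual[OF G])
  have "ptensor_dual_norm p0 (induced_form 1 G) \<le> 1"
    by (rule ptensor_dual_norm_le_lipschitz[OF B0])
      (use G in \<open>simp_all add: induced_form_point_eval lip0_dual_map_def\<close>)
  then have "\<bar>elementary_tensor (molecule c q) x0 (induced_form 1 G)\<bar>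
      \<le> ptensor_bidual_norm p0 (elementary_tensor (molecule c q) x0)"
    by (rule ptensor_bidual_norm_ge[OF tensor(1) B0])
  moreover have "elementary_tensor (molecule c q) x0 (induced_form 1 G) = 1"
    unfolding elementary_tensor_def ptensor_dual_molecule[OF B0]
    using \<open>c \<noteq> q\<close> \<phi>(3) by (simp add: induced_form_point_eval G_def dist_commute)
  ultimately show "1 \<le> ptensor_bidual_norm p0 (elementary_tensor (molecule c q) x0)"
    by simp
qed

section \<open>Logarithmic bumps\<close>

definition log_cutoff :: "real \<Rightarrow> real \<Rightarrow> real \<Rightarrow> real" where
  "log_cutoff \<delta> \<rho> u = (if u \<le> \<rho> then 0 else min 1 (\<delta> * ln (u / \<rho>)))"

definition neg_tent :: "real \<Rightarrow> real \<Rightarrow> real" where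
  "neg_tent d u = - max 0 (d - u)"

lemma log_cutoff_eq_0: "u \<le> \<rho> \<Longrightarrow> log_cutoff \<delta> \<rho> u = 0"
  unfolding log_cutoff_def by simp

lemma log_cutoff_range: "\<delta> > 0 \<Longrightarrow> \<rho> > 0 \<Longrightarrow> 0 \<le> log_cutoff \<delta> \<rho> u \<and> log_cutoff \<delta> \<rho> u \<le> 1"
  unfolding log_cutoff_def by auto

text \<open>The logarithmic profile is what makes the cutoff cheap: its variation between radii v \<le> u,
  weighted by v, is only \<delta> (u - v).\<close>

lemma log_cutoff_weighted_lipschitz:
  assumes "\<delta> > 0" "\<rho> > 0" "0 \<le> v" "v \<le> u"
  shows "\<bar>log_cutoff \<delta> \<rho> u - log_cutoff \<delta> \<rho> v\<bar> * v \<le> \<delta> * (u - v)"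
proof (cases "v \<le> \<rho>")
  case True
  show ?thesis
  proof (cases "u \<le> \<rho>")
    case False
    have "log_cutoff \<delta> \<rho> u \<le> \<delta> * ln (u / \<rho>)" using False unfolding log_cutoff_def by simp
    also have "\<dots> \<le> \<delta> * (u / \<rho> - 1)" using False assms by (intro mult_left_mono ln_le_minus_one) auto
    finally have "log_cutoff \<delta> \<rho> u * v \<le> \<delta> * (u / \<rho> - 1) * \<rho>"
      using True assms log_cutoff_range[of \<delta> \<rho> u] by (intro mult_mono) auto
    also have "\<dots> = \<delta> * (u - \<rho>)" using assms by (simp add: field_simps)
    also have "\<dots> \<le> \<delta> * (u - v)" using True assms by simp
    finally show ?thesis
      using True assms log_cutoff_range[of \<delta> \<rho> u] unfolding log_cutoff_def by simp
  qed (use True assms in \<open>simp add: log_cutoff_def\<close>)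
next
  case False
  then have "v > 0" "u > \<rho>" using assms by auto
  have "\<bar>log_cutoff \<delta> \<rho> u - log_cutoff \<delta> \<rho> v\<bar> \<le> \<bar>\<delta> * ln (u / \<rho>) - \<delta> * ln (v / \<rho>)\<bar>"
    using False \<open>u > \<rho>\<close> unfolding log_cutoff_def by (simp add: min_def)
  also have "\<dots> = \<delta> * ln (u / v)"
    using \<open>v > 0\<close> assms by (simp add: ln_div abs_mult flip: right_diff_distrib)
  also have "\<dots> \<le> \<delta> * (u / v - 1)" using \<open>v > 0\<close> assms by (intro mult_left_mono ln_le_minus_one) auto
  finally have "\<bar>log_cutoff \<delta> \<rho> u - log_cutoff \<delta> \<rho> v\<bar> * v \<le> \<delta> * (u / v - 1) * v"
    using \<open>v > 0\<close> by (simp add: mult_right_mono)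
  also have "\<dots> = \<delta> * (u - v)" using \<open>v > 0\<close> by (simp add: field_simps)
  finally show ?thesis .
qed

lemma log_cutoff_eq_1:
  assumes "\<delta> > 0" "\<rho> > 0" "u \<ge> \<rho> * exp (1 / \<delta>)"
  shows "log_cutoff \<delta> \<rho> u = 1"
proof -
  have "\<rho> < \<rho> * exp (1 / \<delta>)" using assms by simp
  then have "u > \<rho>" using assms by linarith
  have "1 / \<delta> \<le> ln (u / \<rho>)"
    using assms \<open>u > \<rho>\<close> by (simp add: ln_ge_iff pos_le_divide_eq mult.commute)
  then have "1 \<le> \<delta> * ln (u / \<rho>)" using assms by (simp add: field_simps)
  then show ?thesis using \<open>u > \<rho>\<close> unfolding log_cutoff_def by simp
qed

lemma neg_tent_lipschitz: "\<bar>neg_tent d u - neg_tent d v\<bar> \<le> \<bar>u - v\<bar>"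
  unfolding neg_tent_def by (simp add: max_def)

lemma neg_tent_eq_0: "d \<le> u \<Longrightarrow> neg_tent d u = 0"
  unfolding neg_tent_def by simp

lemma neg_tent_abs_le: "0 \<le> u \<Longrightarrow> 0 \<le> d \<Longrightarrow> \<bar>neg_tent d u\<bar> \<le> d"
  unfolding neg_tent_def by (simp add: max_def)

text \<open>In (1 - \<delta>) G + bump_kernel G \<phi> c \<delta> d, the values of G
  are frozen to G c on the ball of radius \<rho> = 3 d / \<delta> around c, and a tent of height d in
  the direction of \<phi> is added on the ball of radius d; beyond \<rho> exp (1 / \<delta>) nothing changes.\<close>

definition bump_kernel ::
    "('m::metric_space \<Rightarrow> 'x \<Rightarrow> real) \<Rightarrow> ('x \<Rightarrow> real) \<Rightarrow> 'm \<Rightarrow> real \<Rightarrow> real \<Rightarrow> 'm \<Rightarrow> 'x \<Rightarrow> real" where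
  "bump_kernel G \<phi> c \<delta> d t x =
     (1 - \<delta>) * (log_cutoff \<delta> (3 * d / \<delta>) (dist t c) - 1) * (G t x - G c x)
     + neg_tent d (dist t c) * \<phi> x"

locale bump_perturbation =
  fixes p0 :: "'m::metric_space" and G :: "'m \<Rightarrow> 'x::real_normed_vector \<Rightarrow> real"
    and \<phi> :: "'x \<Rightarrow> real" and c :: 'm and \<delta> d :: real
  assumes G: "lip0_dual_map p0 1 G"
    and \<phi>: "linear \<phi>" "\<And>x. \<bar>\<phi> x\<bar> \<le> norm x"
    and \<delta>: "0 < \<delta>" "\<delta> \<le> 1" and d: "0 < d"
begin

abbreviation "\<rho> \<equiv> 3 * d / \<delta>"

abbreviation "cutoff_increment x t \<equiv> log_cutoff \<delta> \<rho> (dist t c) * (G t x - G c x)"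

lemma rho_pos: "\<rho> > 0"
  using \<delta> d by simp

lemma G_lipschitz: "\<bar>G s x - G t x\<bar> \<le> dist s t * norm x"
  using G unfolding lip0_dual_map_def by simp

lemma cutoff_increment_abs_le: "\<bar>cutoff_increment x t\<bar> \<le> dist t c * norm x"
proof -
  have "\<bar>cutoff_increment x t\<bar> \<le> 1 * \<bar>G t x - G c x\<bar>"
    unfolding abs_mult using log_cutoff_range[OF \<delta>(1) rho_pos] by (intro mult_right_mono) auto
  then show ?thesis using G_lipschitz[where s = t and x = x and t = c] by simp
qed

lemma cutoff_increment_lipschitz_aux:
  assumes "dist t c \<le> dist s c"
  shows "\<bar>cutoff_increment x s - cutoff_increment x t\<bar> \<le> (1 + \<delta>) * dist s t * norm x"
proof -
  define a where "a = log_cutoff \<delta> \<rho> (dist s c)"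
  define b where "b = log_cutoff \<delta> \<rho> (dist t c)"
  have a: "0 \<le> a" "a \<le> 1" using log_cutoff_range[OF \<delta>(1) rho_pos] a_def by auto
  have eq: "cutoff_increment x s - cutoff_increment x t = (a - b) * (G t x - G c x) + a * (G s x - G t x)"
    unfolding a_def b_def by (simp add: algebra_simps)
  have "\<bar>(a - b) * (G t x - G c x)\<bar> \<le> (\<bar>a - b\<bar> * dist t c) * norm x"
    unfolding abs_mult mult.assoc by (intro mult_left_mono G_lipschitz) simp
  also have "\<dots> \<le> (\<delta> * (dist s c - dist t c)) * norm x"
    unfolding a_def b_def
    by (intro mult_right_mono log_cutoff_weighted_lipschitz[OF \<delta>(1) rho_pos] assms) auto
  also have "\<dots> \<le> (\<delta> * dist s t) * norm x"
    using \<delta> abs_dist_diff_le_dist[of s c t] by (intro mult_right_mono mult_left_mono) auto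
  finally have "\<bar>(a - b) * (G t x - G c x)\<bar> \<le> \<delta> * dist s t * norm x" .
  moreover have "\<bar>a * (G s x - G t x)\<bar> \<le> 1 * (dist s t * norm x)"
    unfolding abs_mult using a by (intro mult_mono G_lipschitz) auto
  ultimately show ?thesis unfolding eq by (simp add: algebra_simps abs_triangle_ineq[THEN order_trans])
qed

lemma cutoff_increment_lipschitz:
  "\<bar>cutoff_increment x s - cutoff_increment x t\<bar> \<le> (1 + \<delta>) * dist s t * norm x"
proof (cases "dist t c \<le> dist s c")
  case False
  then have "\<bar>cutoff_increment x t - cutoff_increment x s\<bar> \<le> (1 + \<delta>) * dist t s * norm x"
    by (intro cutoff_increment_lipschitz_aux) simp
  then show ?thesis by (simp add: dist_commute abs_minus_commute)
qed (rule cutoff_increment_lipschitz_aux)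

lemma perturbed_eq:
  "(1 - \<delta>) * G t x + bump_kernel G \<phi> c \<delta> d t x
     = (1 - \<delta>) * (G c x + cutoff_increment x t) + neg_tent d (dist t c) * \<phi> x"
  unfolding bump_kernel_def by (simp add: algebra_simps)

lemma perturbed_lipschitz_across:
  assumes s: "dist s c < d" and t: "dist t c > \<rho>"
  shows "\<bar>((1 - \<delta>) * G s x + bump_kernel G \<phi> c \<delta> d s x) - ((1 - \<delta>) * G t x + bump_kernel G \<phi> c \<delta> d t x)\<bar>
    \<le> dist s t * norm x"
proof -
  have "\<rho> \<ge> 3 * d" using \<delta> d by (simp add: field_simps)
  then have "dist s c \<le> \<rho>" and "d \<le> dist t c" using s t d by linarith+
  then have "log_cutoff \<delta> \<rho> (dist s c) = 0" and "neg_tent d (dist t c) = 0"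
    by (simp_all add: log_cutoff_eq_0 neg_tent_eq_0)
  then have eq: "((1 - \<delta>) * G s x + bump_kernel G \<phi> c \<delta> d s x) - ((1 - \<delta>) * G t x + bump_kernel G \<phi> c \<delta> d t x)
      = neg_tent d (dist s c) * \<phi> x - (1 - \<delta>) * cutoff_increment x t"
    unfolding perturbed_eq by (simp add: algebra_simps)
  have tent: "\<bar>neg_tent d (dist s c) * \<phi> x\<bar> \<le> d * norm x"
    unfolding abs_mult using neg_tent_abs_le[of "dist s c" d] d \<phi>(2) by (intro mult_mono) auto
  have tri: "dist t c \<le> dist s t + dist s c" using dist_triangle3[of t c s] by (simp add: dist_commute add.commute)
  have "\<bar>(1 - \<delta>) * cutoff_increment x t\<bar> \<le> (1 - \<delta>) * (dist t c * norm x)"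
    using mult_left_mono[OF cutoff_increment_abs_le, of "1 - \<delta>"] \<delta> by (simp add: abs_mult)
  also have "\<dots> \<le> (1 - \<delta>) * ((dist s t + d) * norm x)"
    using tri s \<delta> by (intro mult_left_mono mult_right_mono) auto
  finally have "\<bar>neg_tent d (dist s c) * \<phi> x - (1 - \<delta>) * cutoff_increment x t\<bar>
      \<le> ((1 - \<delta>) * (dist s t + d) + d) * norm x"
    using tent by (simp add: algebra_simps abs_triangle_ineq4[THEN order_trans])
  also have "\<dots> \<le> dist s t * norm x"
  proof (intro mult_right_mono)
    have "\<delta> * (\<rho> - d) \<le> \<delta> * dist s t" using tri s t \<delta> by (intro mult_left_mono) auto
    then show "(1 - \<delta>) * (dist s t + d) + d \<le> dist s t" using \<delta> d by (simp add: algebra_simps)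
  qed simp
  finally show ?thesis unfolding eq .
qed

text \<open>The perturbed map stays 1-Lipschitz: inside the tent region the frozen part is constant,
  outside the tent the cutoff costs the factor (1 - \<delta>) (1 + \<delta>) \<le> 1, and the two regions are
  far apart compared to the height d of the tent.\<close>

lemma perturbed_lipschitz:
  "\<bar>((1 - \<delta>) * G s x + bump_kernel G \<phi> c \<delta> d s x) - ((1 - \<delta>) * G t x + bump_kernel G \<phi> c \<delta> d t x)\<bar>
    \<le> dist s t * norm x"
proof -
  have eq: "((1 - \<delta>) * G s x + bump_kernel G \<phi> c \<delta> d s x) - ((1 - \<delta>) * G t x + bump_kernel G \<phi> c \<delta> d t x)
      = (1 - \<delta>) * (cutoff_increment x s - cutoff_increment x t)
        + (neg_tent d (dist s c) - neg_tent d (dist t c)) * \<phi> x"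
    unfolding perturbed_eq by (simp add: algebra_simps)
  have tent: "\<bar>(neg_tent d (dist s c) - neg_tent d (dist t c)) * \<phi> x\<bar> \<le> dist s t * norm x"
    unfolding abs_mult using neg_tent_lipschitz[of d "dist s c" "dist t c"] abs_dist_diff_le_dist[of s c t] \<phi>(2)
    by (intro mult_mono) auto
  have "\<rho> \<ge> 3 * d" using \<delta> d by (simp add: field_simps)
  then consider "d \<le> dist s c \<and> d \<le> dist t c" | "dist s c \<le> \<rho> \<and> dist t c \<le> \<rho>"
    | "dist s c < d \<and> dist t c > \<rho>" | "dist t c < d \<and> dist s c > \<rho>"
    using d by fastforce
  then show ?thesis
  proof cases
    case 1
    have "\<bar>(1 - \<delta>) * (cutoff_increment x s - cutoff_increment x t)\<bar> \<le> (1 - \<delta>) * ((1 + \<delta>) * dist s t * norm x)"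
      unfolding abs_mult using \<delta> cutoff_increment_lipschitz[where x = x and s = s and t = t] by (intro mult_mono) auto
    also have "\<dots> = (1 - \<delta> * \<delta>) * (dist s t * norm x)" by (simp add: algebra_simps)
    also have "\<dots> \<le> dist s t * norm x"
      using \<delta> by (intro mult_left_le_one_le) (auto simp: mult_le_one)
    finally show ?thesis using 1 unfolding eq by (simp add: neg_tent_eq_0)
  next
    case 2
    then show ?thesis using tent unfolding eq by (simp add: log_cutoff_eq_0)
  next
    case 3
    then show ?thesis using perturbed_lipschitz_across by blast
  next
    case 4
    then show ?thesis
      using perturbed_lipschitz_across[where s = t and t = s and x = x]
      by (simp add: dist_commute abs_minus_commute)
  qed
qed

lemma bump_kernel_lipschitz: "\<bar>bump_kernel G \<phi> c \<delta> d s x - bump_kernel G \<phi> c \<delta> d t x\<bar> \<le> 4 * dist s t * norm x"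
proof -
  have "\<bar>(1 - \<delta>) * (G s x - G t x)\<bar> \<le> 1 * (dist s t * norm x)"
    unfolding abs_mult using \<delta> G_lipschitz[where s = s and x = x and t = t] by (intro mult_mono) auto
  moreover have "bump_kernel G \<phi> c \<delta> d s x - bump_kernel G \<phi> c \<delta> d t x
      = (((1 - \<delta>) * G s x + bump_kernel G \<phi> c \<delta> d s x) - ((1 - \<delta>) * G t x + bump_kernel G \<phi> c \<delta> d t x))
        - (1 - \<delta>) * (G s x - G t x)"
    by (simp add: algebra_simps)
  ultimately show ?thesis
    using perturbed_lipschitz[where s = s and x = x and t = t] by (simp add: abs_triangle_ineq4[THEN order_trans])
qed

lemma bump_kernel_eq_0:
  assumes "dist t c \<ge> \<rho> * exp (1 / \<delta>)"
  shows "bump_kernel G \<phi> c \<delta> d t x = 0"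
proof -
  have "\<rho> * 1 \<le> \<rho> * exp (1 / \<delta>)" using rho_pos \<delta> by (intro mult_left_mono) auto
  moreover have "d \<le> \<rho>" using \<delta> d by (simp add: field_simps)
  ultimately have "d \<le> dist t c" using assms by linarith
  then show ?thesis
    unfolding bump_kernel_def using log_cutoff_eq_1[OF \<delta>(1) rho_pos assms] neg_tent_eq_0 by simp
qed

lemma bump_kernel_center: "bump_kernel G \<phi> c \<delta> d c x = - d * \<phi> x"
  unfolding bump_kernel_def log_cutoff_def neg_tent_def using \<delta> d by simp

lemma bump_kernel_rim: "dist q c = d \<Longrightarrow> bump_kernel G \<phi> c \<delta> d q x = - (1 - \<delta>) * (G q x - G c x)"
  unfolding bump_kernel_def log_cutoff_def neg_tent_def using \<delta> d by (simp add: field_simps)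

lemma lip0_dual_map_bump_kernel:
  assumes "dist p0 c \<ge> \<rho> * exp (1 / \<delta>)"
  shows "lip0_dual_map p0 4 (bump_kernel G \<phi> c \<delta> d)"
  unfolding lip0_dual_map_def
proof (intro conjI allI)
  have "linear (G t)" for t using G unfolding lip0_dual_map_def by blast
  then show "linear (bump_kernel G \<phi> c \<delta> d t)" for t
    unfolding bump_kernel_def using \<phi>(1)
    by (intro linearI) (simp_all add: linear_add linear_scale algebra_simps)
qed (use bump_kernel_eq_0[OF assms] bump_kernel_lipschitz in auto)

end

definition bump_form :: "((('m::metric_space \<Rightarrow> real) \<Rightarrow> real) \<Rightarrow> 'x::real_normed_vector \<Rightarrow> real)
    \<Rightarrow> ('x \<Rightarrow> real) \<Rightarrow> 'm \<Rightarrow> 'm \<Rightarrow> real \<Rightarrow> (('m \<Rightarrow> real) \<Rightarrow> real) \<Rightarrow> 'x \<Rightarrow> real" where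
  "bump_form B \<phi> c q \<delta> = induced_form 4 (bump_kernel (\<lambda>t. B (point_eval t)) \<phi> c \<delta> (dist q c))"

lemma bump_form_point_eval:
  "bump_form B \<phi> c q \<delta> (point_eval t) x = bump_kernel (\<lambda>t. B (point_eval t)) \<phi> c \<delta> (dist q c) t x"
  unfolding bump_form_def by (rule induced_form_point_eval) simp

lemma
  assumes B: "B \<in> ptensor_dual p0" "ptensor_dual_norm p0 B \<le> 1"
    and \<phi>: "linear \<phi>" "\<And>x. \<bar>\<phi> x\<bar> \<le> norm x"
    and \<delta>: "0 < \<delta>" "\<delta> \<le> 1" and "q \<noteq> c"
    and far: "dist p0 c \<ge> 3 * dist q c / \<delta> * exp (1 / \<delta>)"
  shows bump_form_in_ptensor_dual: "bump_form B \<phi> c q \<delta> \<in> ptensor_dual p0"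
    and perturbed_form_in_ptensor_dual:
      "(\<lambda>mu x. (1 - \<delta>) * B mu x + bump_form B \<phi> c q \<delta> mu x) \<in> ptensor_dual p0"
    and perturbed_form_norm_le:
      "ptensor_dual_norm p0 (\<lambda>mu x. (1 - \<delta>) * B mu x + bump_form B \<phi> c q \<delta> mu x) \<le> 1"
    and perturbed_form_molecule:
      "(1 - \<delta>) * B (molecule c q) x + bump_form B \<phi> c q \<delta> (molecule c q) x = - \<phi> x"
proof -
  let ?G = "\<lambda>t. B (point_eval t)"
  have G: "lip0_dual_map p0 1 ?G" by (rule lip0_dual_map_point_evals[OF B])
  have d: "dist q c > 0" using \<open>q \<noteq> c\<close> by simp
  interpret bump_perturbation p0 ?G \<phi> c \<delta> "dist q c" by (rule bump_perturbation.intro[OF G \<phi> \<delta> d])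
  show H: "bump_form B \<phi> c q \<delta> \<in> ptensor_dual p0"
    unfolding bump_form_def
    by (rule induced_form_in_ptensor_dual[OF lip0_dual_map_bump_kernel[OF far]])
  show Bn: "(\<lambda>mu x. (1 - \<delta>) * B mu x + bump_form B \<phi> c q \<delta> mu x) \<in> ptensor_dual p0"
    by (rule ptensor_dual_add[OF ptensor_dual_scale[OF B(1)] H])
  show "ptensor_dual_norm p0 (\<lambda>mu x. (1 - \<delta>) * B mu x + bump_form B \<phi> c q \<delta> mu x) \<le> 1"
    by (rule ptensor_dual_norm_le_lipschitz[OF Bn])
      (use perturbed_lipschitz in \<open>simp_all add: bump_form_point_eval\<close>)
  have "(1 - \<delta>) * B (point_eval c) x + bump_form B \<phi> c q \<delta> (point_eval c) x
      - ((1 - \<delta>) * B (point_eval q) x + bump_form B \<phi> c q \<delta> (point_eval q) x) = - dist q c * \<phi> x"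
    unfolding bump_form_point_eval bump_kernel_center bump_kernel_rim[OF refl]
    by (simp add: algebra_simps)
  then show "(1 - \<delta>) * B (molecule c q) x + bump_form B \<phi> c q \<delta> (molecule c q) x = - \<phi> x"
    using ptensor_dual_molecule[OF Bn, of c q x] d by (simp add: dist_commute)
qed

section \<open>Choosing the centre of the bumps\<close>

lemma sum_disjoint_supports_lipschitz:
  fixes u :: "'m::metric_space \<Rightarrow> 'm \<Rightarrow> real"
  assumes "finite F"
    and lip: "\<And>c. c \<in> F \<Longrightarrow> \<bar>u c s - u c t\<bar> \<le> L * dist s t"
    and supp: "\<And>c y. c \<in> F \<Longrightarrow> R \<le> dist y c \<Longrightarrow> u c y = 0"
    and sep: "\<And>c c'. c \<in> F \<Longrightarrow> c' \<in> F \<Longrightarrow> c \<noteq> c' \<Longrightarrow> 2 * R \<le> dist c c'"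
    and a: "\<And>c. c \<in> F \<Longrightarrow> \<bar>a c\<bar> \<le> A" and "A \<ge> 0" "L \<ge> 0"
  shows "\<bar>\<Sum>c\<in>F. a c * (u c s - u c t)\<bar> \<le> 2 * A * L * dist s t"
proof -
  define near where "near w = {c \<in> F. dist w c < R}" for w
  have card_near: "card (near w) \<le> 1" for w
  proof -
    have "c = c'" if "c \<in> near w" "c' \<in> near w" for c c'
      using that sep[of c c'] dist_triangle3[of c c' w] unfolding near_def by force
    then show ?thesis using \<open>finite F\<close> by (simp add: card_le_Suc0_iff_eq near_def)
  qed
  have sub: "near s \<union> near t \<subseteq> F" unfolding near_def by auto
  have "(\<Sum>c\<in>F. a c * (u c s - u c t)) = (\<Sum>c\<in>near s \<union> near t. a c * (u c s - u c t))"
    by (rule sum.mono_neutral_right[OF \<open>finite F\<close> sub]) (auto simp: near_def not_less supp)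
  also have "\<bar>\<dots>\<bar> \<le> (\<Sum>c\<in>near s \<union> near t. A * (L * dist s t))"
    using sub a lip \<open>A \<ge> 0\<close> by (intro order_trans[OF sum_abs] sum_mono) (auto simp: abs_mult intro!: mult_mono)
  also have "\<dots> = real (card (near s \<union> near t)) * (A * (L * dist s t))" by simp
  also have "\<dots> \<le> 2 * (A * (L * dist s t))"
  proof (rule mult_right_mono)
    have "card (near s \<union> near t) \<le> 2"
      using card_Un_le[of "near s" "near t"] card_near[of s] card_near[of t] by linarith
    then show "real (card (near s \<union> near t)) \<le> 2" by simp
  qed (use \<open>A \<ge> 0\<close> \<open>L \<ge> 0\<close> in simp)
  finally show ?thesis by (simp add: mult.assoc)
qed

text \<open>Bumps with disjoint supports can be combined with arbitrary signs into a single form of norm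
  at most 1; testing Phi on it bounds the total mass that Phi gives to all of them.\<close>

lemma sum_abs_ptensor_bidual_disjoint_bumps_le:
  assumes Phi: "Phi \<in> ptensor_bidual p0" and "finite F" and "L > 0"
    and K: "\<And>c. c \<in> F \<Longrightarrow> lip0_dual_map p0 L (K c)"
    and supp: "\<And>c y x. c \<in> F \<Longrightarrow> R \<le> dist y c \<Longrightarrow> K c y x = 0"
    and sep: "\<And>c c'. c \<in> F \<Longrightarrow> c' \<in> F \<Longrightarrow> c \<noteq> c' \<Longrightarrow> 2 * R \<le> dist c c'"
  shows "(\<Sum>c\<in>F. \<bar>Phi (induced_form L (K c))\<bar>) \<le> 2 * L * ptensor_bidual_norm p0 Phi"
proof -
  define H where "H c = induced_form L (K c)" for c
  have H: "H c \<in> ptensor_dual p0" if "c \<in> F" for c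
    unfolding H_def by (rule induced_form_in_ptensor_dual[OF K[OF that]])
  have H_point_eval: "H c (point_eval t) x = K c t x" for c t x
    unfolding H_def by (rule induced_form_point_eval) (use \<open>L > 0\<close> in simp)
  define a where "a c = sgn (Phi (H c)) / (2 * L)" for c
  define W where "W = (\<lambda>mu x. \<Sum>c\<in>F. a c * H c mu x)"
  have W: "W \<in> ptensor_dual p0"
    unfolding W_def by (intro ptensor_dual_sum[OF \<open>finite F\<close>] ptensor_dual_scale H)
  have "Phi W = (\<Sum>c\<in>F. Phi (\<lambda>mu x. a c * H c mu x))"
    unfolding W_def by (rule ptensor_bidual_sum[OF Phi \<open>finite F\<close> ptensor_dual_scale[OF H]])
  also have "\<dots> = (\<Sum>c\<in>F. a c * Phi (H c))"
    by (intro sum.cong refl ptensor_bidual_scale[OF Phi H])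
  also have "\<dots> = (\<Sum>c\<in>F. \<bar>Phi (H c)\<bar>) / (2 * L)"
    unfolding a_def sum_divide_distrib by (intro sum.cong refl) (simp add: abs_sgn mult.commute)
  finally have PhiW: "Phi W = (\<Sum>c\<in>F. \<bar>Phi (H c)\<bar>) / (2 * L)" .
  have "ptensor_dual_norm p0 W \<le> 1"
  proof (rule ptensor_dual_norm_le_lipschitz[OF W])
    fix s t x
    have "\<bar>W (point_eval s) x - W (point_eval t) x\<bar> = \<bar>\<Sum>c\<in>F. a c * (K c s x - K c t x)\<bar>"
      unfolding W_def H_point_eval by (simp add: sum_subtractf right_diff_distrib)
    also have "\<dots> \<le> 2 * (1 / (2 * L)) * (L * norm x) * dist s t"
    proof (rule sum_disjoint_supports_lipschitz[OF \<open>finite F\<close>])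
      show "\<bar>K c s x - K c t x\<bar> \<le> L * norm x * dist s t" if "c \<in> F" for c s t
        using K[OF that] unfolding lip0_dual_map_def by (simp add: ac_simps)
      show "\<bar>a c\<bar> \<le> 1 / (2 * L)" for c
        unfolding a_def using \<open>L > 0\<close> by (simp add: abs_sgn_eq)
    qed (use supp sep \<open>L > 0\<close> in auto)
    finally show "\<bar>W (point_eval s) x - W (point_eval t) x\<bar> \<le> 1 * dist s t * norm x"
      using \<open>L > 0\<close> by (simp add: mult.commute)
  qed simp
  then have "\<bar>Phi W\<bar> \<le> ptensor_bidual_norm p0 Phi" by (rule ptensor_bidual_norm_ge[OF Phi W])
  then show ?thesis
    unfolding PhiW H_def using \<open>L > 0\<close> by (simp add: abs_of_nonneg sum_nonneg pos_divide_le_eq mult.commute)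
qed

lemma finite_exists_le_average:
  fixes f :: "'a \<Rightarrow> real"
  assumes "finite F" "F \<noteq> {}"
  shows "\<exists>c\<in>F. f c \<le> (\<Sum>c\<in>F. f c) / real (card F)"
proof (rule ccontr)
  assume "\<not> ?thesis"
  then have "(\<Sum>c\<in>F. (\<Sum>c\<in>F. f c) / real (card F)) < (\<Sum>c\<in>F. f c)"
    using assms by (intro sum_strict_mono) auto
  then show False using assms by simp
qed

lemma exists_column_le_average:
  fixes v :: "nat \<Rightarrow> 'a \<Rightarrow> real" and n :: nat
  assumes "finite F" "F \<noteq> {}" and nonneg: "\<And>i c. 0 \<le> v i c"
    and rows: "\<And>i. i < n \<Longrightarrow> (\<Sum>c\<in>F. v i c) \<le> A"
  obtains c where "c \<in> F" "\<And>i. i < n \<Longrightarrow> v i c \<le> real n * A / card F"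
proof -
  have "(\<Sum>c\<in>F. \<Sum>i<n. v i c) = (\<Sum>i<n. \<Sum>c\<in>F. v i c)" by (rule sum.swap)
  also have "\<dots> \<le> real n * A" using sum_mono[of "{..<n}", OF rows] by simp
  finally have total: "(\<Sum>c\<in>F. \<Sum>i<n. v i c) \<le> real n * A" .
  obtain c where "c \<in> F" and avg: "(\<Sum>i<n. v i c) \<le> (\<Sum>c\<in>F. \<Sum>i<n. v i c) / card F"
    using finite_exists_le_average[OF assms(1,2), of "\<lambda>c. \<Sum>i<n. v i c"] by blast
  have "(\<Sum>c\<in>F. \<Sum>i<n. v i c) / card F \<le> real n * A / card F"
    using total by (simp add: divide_right_mono)
  show ?thesis
  proof (rule that[OF \<open>c \<in> F\<close>])
    fix i assume "i < n"
    then have "v i c \<le> (\<Sum>i<n. v i c)"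
      using member_le_sum[of i "{..<n}" "\<lambda>i. v i c"] nonneg by simp
    then show "v i c \<le> real n * A / card F"
      using avg \<open>(\<Sum>c\<in>F. \<Sum>i<n. v i c) / card F \<le> real n * A / card F\<close> by linarith
  qed
qed

lemma finite_separated:
  fixes S :: "'m::metric_space set"
  assumes "finite S"
  obtains R where "R > 0" "\<And>a b. a \<in> S \<Longrightarrow> b \<in> S \<Longrightarrow> a \<noteq> b \<Longrightarrow> R \<le> dist a b"
proof
  define D where "D = insert 1 ((\<lambda>(a, b). dist a b) ` (S \<times> S - Id))"
  have "finite D" unfolding D_def using assms by auto
  then show "Min D > 0" unfolding D_def by (subst Min_gr_iff) auto
  show "Min D \<le> dist a b" if "a \<in> S" "b \<in> S" "a \<noteq> b" for a b
    using \<open>finite D\<close> that unfolding D_def by (intro Min_le) auto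
qed

lemma exists_separated_cluster_points:
  fixes p0 :: "'m::metric_space"
  assumes "infinite {q::'m. q islimpt UNIV}"
  obtains F R where "finite F" "card F = N" "p0 \<notin> F" "R > 0" "\<And>c. c \<in> F \<Longrightarrow> c islimpt UNIV"
    "\<And>a b. a \<in> insert p0 F \<Longrightarrow> b \<in> insert p0 F \<Longrightarrow> a \<noteq> b \<Longrightarrow> 2 * R \<le> dist a b"
proof -
  have "infinite ({q::'m. q islimpt UNIV} - {p0})" using assms by simp
  then obtain F where F: "finite F" "card F = N" "F \<subseteq> {q. q islimpt UNIV} - {p0}"
    using infinite_arbitrarily_large by blast
  moreover obtain R where "R > 0" "\<And>a b. a \<in> insert p0 F \<Longrightarrow> b \<in> insert p0 F \<Longrightarrow> a \<noteq> b \<Longrightarrow> R \<le> dist a b"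
    using finite_separated[of "insert p0 F"] F(1) by blast
  ultimately show ?thesis by (intro that[of F "R / 2"]) auto
qed

lemma sum_abs_bump_forms_le:
  assumes z: "z \<in> ptensor_bidual p0" and B: "B \<in> ptensor_dual p0" "ptensor_dual_norm p0 B \<le> 1"
    and \<phi>: "linear \<phi>" "\<And>x. \<bar>\<phi> x\<bar> \<le> norm x" and \<delta>: "0 < \<delta>" "\<delta> \<le> 1"
    and "finite F" "p0 \<notin> F" and q: "\<And>c. c \<in> F \<Longrightarrow> q c \<noteq> c"
    and radius: "\<And>c. c \<in> F \<Longrightarrow> 3 * dist (q c) c / \<delta> * exp (1 / \<delta>) < R"
    and sep: "\<And>a b. a \<in> insert p0 F \<Longrightarrow> b \<in> insert p0 F \<Longrightarrow> a \<noteq> b \<Longrightarrow> 2 * R \<le> dist a b"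
  shows "(\<Sum>c\<in>F. \<bar>z (bump_form B \<phi> c (q c) \<delta>)\<bar>) \<le> 8 * ptensor_bidual_norm p0 z"
proof -
  let ?K = "\<lambda>c. bump_kernel (\<lambda>t. B (point_eval t)) \<phi> c \<delta> (dist (q c) c)"
  have pert: "bump_perturbation p0 (\<lambda>t. B (point_eval t)) \<phi> \<delta> (dist (q c) c)" if "c \<in> F" for c
    using lip0_dual_map_point_evals[OF B] \<phi> \<delta> q[OF that] by (intro bump_perturbation.intro) auto
  have "3 * dist (q c) c / \<delta> * exp (1 / \<delta>) \<le> dist p0 c" if "c \<in> F" for c
  proof -
    have "2 * R \<le> dist p0 c" using sep[of p0 c] that \<open>p0 \<notin> F\<close> by auto
    moreover have "0 \<le> 3 * dist (q c) c / \<delta> * exp (1 / \<delta>)" using \<delta> by simp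
    ultimately show ?thesis using radius[OF that] by linarith
  qed
  then have "(\<Sum>c\<in>F. \<bar>z (induced_form 4 (?K c))\<bar>) \<le> 2 * 4 * ptensor_bidual_norm p0 z"
  proof (intro sum_abs_ptensor_bidual_disjoint_bumps_le[where R = R, OF z \<open>finite F\<close>])
    show "?K c y x = 0" if "c \<in> F" "R \<le> dist y c" for c y x
      using bump_perturbation.bump_kernel_eq_0[OF pert[OF that(1)]] radius[OF that(1)] that(2) by simp
  qed (use bump_perturbation.lip0_dual_map_bump_kernel[OF pert] sep in auto)
  then show ?thesis by (simp add: bump_form_def)
qed

text \<open>Each z i gives total mass at most 8 to the bumps around the well separated centres in F, so
  once card F > 8 n / \<delta> some centre receives mass at most \<delta> from every z i.\<close>

lemma exists_center_with_small_bumps: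
  fixes p0 :: "'m::metric_space" and n :: nat
  assumes "infinite {q::'m. q islimpt UNIV}"
    and z: "\<And>i. i < n \<Longrightarrow> z i \<in> ptensor_bidual p0 \<and> ptensor_bidual_norm p0 (z i) = 1"
    and B: "\<And>i. i < n \<Longrightarrow> B i \<in> ptensor_dual p0 \<and> ptensor_dual_norm p0 (B i) \<le> 1"
    and \<phi>: "linear \<phi>" "\<And>x. \<bar>\<phi> x\<bar> \<le> norm x" and \<delta>: "0 < \<delta>" "\<delta> \<le> 1"
  obtains c q where "q \<noteq> c" "3 * dist q c / \<delta> * exp (1 / \<delta>) \<le> dist p0 c"
    "\<And>i. i < n \<Longrightarrow> \<bar>z i (bump_form (B i) \<phi> c q \<delta>)\<bar> \<le> \<delta>"
proof -
  obtain F R where F: "finite F" "card F = nat \<lceil>8 * real n / \<delta>\<rceil> + 1" "p0 \<notin> F" and "R > 0"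
    and cluster: "\<And>c. c \<in> F \<Longrightarrow> c islimpt UNIV"
    and sep: "\<And>a b. a \<in> insert p0 F \<Longrightarrow> b \<in> insert p0 F \<Longrightarrow> a \<noteq> b \<Longrightarrow> 2 * R \<le> dist a b"
    using exists_separated_cluster_points[OF assms(1)] by metis
  define r where "r = R * \<delta> / (3 * exp (1 / \<delta>))"
  have "r > 0" unfolding r_def using \<open>R > 0\<close> \<delta> by simp
  then have "\<forall>c\<in>F. \<exists>q. q \<noteq> c \<and> dist q c < r"
    using cluster unfolding islimpt_approachable by blast
  then obtain q where q: "\<And>c. c \<in> F \<Longrightarrow> q c \<noteq> c \<and> dist (q c) c < r" by metis
  have radius: "3 * dist (q c) c / \<delta> * exp (1 / \<delta>) < R" if "c \<in> F" for c
  proof -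
    have "3 * dist (q c) c / \<delta> * exp (1 / \<delta>) < 3 * r / \<delta> * exp (1 / \<delta>)"
      using q[OF that] \<delta> by (simp add: divide_strict_right_mono)
    then show ?thesis unfolding r_def using \<delta> by simp
  qed
  have "F \<noteq> {}" using F(2) by (metis card.empty add_is_0 zero_neq_one)
  then obtain c where "c \<in> F" and c: "\<And>i. i < n \<Longrightarrow> \<bar>z i (bump_form (B i) \<phi> c (q c) \<delta>)\<bar> \<le> real n * 8 / card F"
  proof (rule exists_column_le_average[OF F(1)])
    show "(\<Sum>c\<in>F. \<bar>z i (bump_form (B i) \<phi> c (q c) \<delta>)\<bar>) \<le> 8" if "i < n" for i
      using sum_abs_bump_forms_le[of "z i" p0 "B i", OF _ _ _ \<phi> \<delta> F(1,3) _ radius sep] z[OF that] B[OF that] q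
      by simp
  qed auto
  have "8 * real n / \<delta> < card F" using F(2) real_nat_ceiling_ge[of "8 * real n / \<delta>"] by simp
  moreover have "0 < real (card F)" using F(2) by simp
  ultimately have "real n * 8 / card F \<le> \<delta>"
    using \<delta>(1) by (simp add: pos_divide_le_eq pos_divide_less_eq mult.commute)
  moreover have "3 * dist (q c) c / \<delta> * exp (1 / \<delta>) \<le> dist p0 c"
  proof -
    have "2 * R \<le> dist p0 c" using sep[of p0 c] \<open>c \<in> F\<close> F(3) by auto
    then show ?thesis using radius[OF \<open>c \<in> F\<close>] \<open>R > 0\<close> by linarith
  qed
  ultimately show ?thesis using that[of "q c" c] q[OF \<open>c \<in> F\<close>] c by force
qed

lemma ptensor_bidual_norm_diff_molecule_tensor_ge:
  assumes z: "z \<in> ptensor_bidual p0"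
    and B: "B \<in> ptensor_dual p0" "ptensor_dual_norm p0 B \<le> 1" "z B > 1 - \<delta>"
    and \<phi>: "linear \<phi>" "\<And>x. \<bar>\<phi> x\<bar> \<le> norm x" "\<phi> x0 = 1" and "norm x0 = 1"
    and \<delta>: "0 < \<delta>" "\<delta> \<le> 1" and "q \<noteq> c"
    and far: "3 * dist q c / \<delta> * exp (1 / \<delta>) \<le> dist p0 c"
    and small: "\<bar>z (bump_form B \<phi> c q \<delta>)\<bar> \<le> \<delta>"
  shows "2 - 3 * \<delta> \<le> ptensor_bidual_norm p0 (\<lambda>t. z t - elementary_tensor (molecule c q) x0 t)"
proof -
  let ?H = "bump_form B \<phi> c q \<delta>" and ?y = "elementary_tensor (molecule c q) x0"
  let ?Bn = "\<lambda>mu x. (1 - \<delta>) * B mu x + ?H mu x"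
  note H = bump_form_in_ptensor_dual[OF B(1,2) \<phi>(1,2) \<delta> \<open>q \<noteq> c\<close> far]
  have y: "?y \<in> ptensor_bidual p0"
    by (rule molecule_tensor_in_ptensor_bidual) (simp add: \<open>norm x0 = 1\<close>)
  have "\<bar>z ?Bn - ?y ?Bn\<bar> \<le> ptensor_bidual_norm p0 (\<lambda>t. z t - ?y t)"
    by (rule ptensor_bidual_norm_ge[OF ptensor_bidual_diff[OF z y]])
      (use perturbed_form_in_ptensor_dual[OF B(1,2) \<phi>(1,2) \<delta> \<open>q \<noteq> c\<close> far]
        perturbed_form_norm_le[OF B(1,2) \<phi>(1,2) \<delta> \<open>q \<noteq> c\<close> far] in auto)
  moreover have "z ?Bn = (1 - \<delta>) * z B + z ?H"
    using ptensor_bidual_add[OF z ptensor_dual_scale[OF B(1)] H] ptensor_bidual_scale[OF z B(1)] by simp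
  moreover have "?y ?Bn = -1"
    using perturbed_form_molecule[OF B(1,2) \<phi>(1,2) \<delta> \<open>q \<noteq> c\<close> far] \<phi>(3)
    by (simp add: elementary_tensor_def)
  moreover have "(1 - \<delta>) * (1 - \<delta>) \<le> (1 - \<delta>) * z B" using B(3) \<delta> by (intro mult_left_mono) auto
  moreover have "1 - 2 * \<delta> \<le> (1 - \<delta>) * (1 - \<delta>)"
    using mult_nonneg_nonneg[of \<delta> \<delta>] \<delta> by (simp add: algebra_simps)
  ultimately show ?thesis using small abs_ge_self[of "z ?Bn - ?y ?Bn"] by linarith
qed

lemma exists_molecule_tensor_far_from_all:
  fixes p0 :: "'m::metric_space" and n :: nat
  assumes "infinite {q::'m. q islimpt UNIV}"
    and z: "\<And>i. i < n \<Longrightarrow> z i \<in> ptensor_bidual p0 \<and> ptensor_bidual_norm p0 (z i) = 1"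
    and x0: "norm x0 = 1" and \<phi>: "linear \<phi>" "\<And>x. \<bar>\<phi> x\<bar> \<le> norm x" "\<phi> x0 = 1"
    and \<delta>: "0 < \<delta>" "\<delta> \<le> 1"
  shows "\<exists>c q. c \<noteq> q \<and>
    (\<forall>i<n. 2 - 3 * \<delta> \<le> ptensor_bidual_norm p0 (\<lambda>t. z i t - elementary_tensor (molecule c q) x0 t))"
proof -
  have "\<forall>i. \<exists>Bi. i < n \<longrightarrow> Bi \<in> ptensor_dual p0 \<and> ptensor_dual_norm p0 Bi \<le> 1 \<and> z i Bi > 1 - \<delta>"
    by (metis ptensor_bidual_exists_almost_norming z \<delta>(1))
  then obtain B where B: "\<And>i. i < n \<Longrightarrow> B i \<in> ptensor_dual p0 \<and> ptensor_dual_norm p0 (B i) \<le> 1 \<and> z i (B i) > 1 - \<delta>"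
    by (metis choice)
  then have "\<And>i. i < n \<Longrightarrow> B i \<in> ptensor_dual p0 \<and> ptensor_dual_norm p0 (B i) \<le> 1" by blast
  then obtain c q where "q \<noteq> c" and far: "3 * dist q c / \<delta> * exp (1 / \<delta>) \<le> dist p0 c"
    and small: "\<And>i. i < n \<Longrightarrow> \<bar>z i (bump_form (B i) \<phi> c q \<delta>)\<bar> \<le> \<delta>"
    using exists_center_with_small_bumps[where n = n and z = z and B = B, OF assms(1) z _ \<phi>(1,2) \<delta>]
    by metis
  show ?thesis
  proof (intro exI conjI allI impI)
    show "c \<noteq> q" using \<open>q \<noteq> c\<close> by simp
    show "2 - 3 * \<delta> \<le> ptensor_bidual_norm p0 (\<lambda>t. z i t - elementary_tensor (molecule c q) x0 t)"
      if "i < n" for i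
      using z[OF that] B[OF that] by (intro ptensor_bidual_norm_diff_molecule_tensor_ge[where \<phi> = \<phi>
          and z = "z i" and B = "B i", OF _ _ _ _ \<phi> x0 \<delta> \<open>q \<noteq> c\<close> far small[OF that]]) auto
  qed
qed

theorem theorem4p4:
  fixes p0 :: "'m::metric_space"
  assumes "infinite {q::'m. q islimpt (UNIV::'m set)}"
    and "\<exists>x::'x::banach. x \<noteq> 0"
  shows "octahedral_fun_space (ptensor_bidual p0 :: (((('m \<Rightarrow> real) \<Rightarrow> real) \<Rightarrow> 'x \<Rightarrow> real) \<Rightarrow> real) set)
           (ptensor_bidual_norm p0)"
  unfolding octahedral_fun_space_def
proof (intro allI impI, elim conjE)
  fix n :: nat and z :: "nat \<Rightarrow> (((('m \<Rightarrow> real) \<Rightarrow> real) \<Rightarrow> 'x \<Rightarrow> real) \<Rightarrow> real)" and e :: real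
  assume "\<forall>i<n. z i \<in> ptensor_bidual p0 \<and> ptensor_bidual_norm p0 (z i) = 1" and "0 < e"
  then have z: "\<And>i. i < n \<Longrightarrow> z i \<in> ptensor_bidual p0 \<and> ptensor_bidual_norm p0 (z i) = 1" by blast
  obtain x0 :: 'x and \<phi> where x0: "norm x0 = 1" and \<phi>: "linear \<phi>" "\<And>x. \<bar>\<phi> x\<bar> \<le> norm x" "\<phi> x0 = 1"
    using exists_unit_norming_functional[OF assms(2)] by blast
  define \<delta> where "\<delta> = min e 1 / 3"
  have \<delta>: "0 < \<delta>" "\<delta> \<le> 1" "2 - e \<le> 2 - 3 * \<delta>" using \<open>0 < e\<close> unfolding \<delta>_def by auto
  obtain c q where "c \<noteq> q"
    and far: "\<And>i. i < n \<Longrightarrow> 2 - 3 * \<delta> \<le> ptensor_bidual_norm p0 (\<lambda>t. z i t - elementary_tensor (molecule c q) x0 t)"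
    using exists_molecule_tensor_far_from_all[where n = n and z = z, OF assms(1) z x0 \<phi> \<delta>(1,2)] by blast
  show "\<exists>y\<in>ptensor_bidual p0. ptensor_bidual_norm p0 y = 1 \<and>
      (\<forall>i<n. 2 - e \<le> ptensor_bidual_norm p0 (\<lambda>t. z i t - y t))"
  proof (intro bexI conjI allI impI)
    show "elementary_tensor (molecule c q) x0 \<in> ptensor_bidual p0"
      using x0 by (intro molecule_tensor_in_ptensor_bidual) simp
    show "ptensor_bidual_norm p0 (elementary_tensor (molecule c q) x0) = 1"
      by (rule ptensor_bidual_norm_molecule_tensor[OF \<open>c \<noteq> q\<close> x0 \<phi>])
    show "2 - e \<le> ptensor_bidual_norm p0 (\<lambda>t. z i t - elementary_tensor (molecule c q) x0 t)"
      if "i < n" for i using far[OF that] \<delta>(3) by linarith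
  qed
qed

end
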